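(* For each $n\ge 1$ let $\mathcal{Q}_n:=\mathbb{K}[x_1,\dots,x_n]$, let $\mathrm{id}:=1\in\mathbb{K}[x_1]$, and for $P\in\mathcal{Q}_n$, $Q\in\mathcal{Q}_m$, $1\le i\le n$, define $$(P\circ_i Q)(x_1,\dots,x_{n+m-1}):=P(x_1,\dots,x_{i-1},\,x_i+\cdots+x_{i+m-1},\,x_{i+m},\dots,x_{n+m-1})\,Q(x_i,\dots,x_{i+m-1}).$$ Then $(\mathcal{Q}_n)_{n\ge1}$ with these partial compositions is a ns operad, and there is an isomorphism of ns operads $AsDer\cong\mathcal{Q}$ sending $\mathrm{id}\mapsto 1\in\mathbb{K}[x_1]$, $D\mapsto x_1\in\mathbb{K}[x_1]$ and $\mu\mapsto 1\in\mathbb{K}[x_1,x_2]$. Equivalently, the full composition is $$\gamma(P;Q_1,\dots,Q_k)(x_1,\dots,x_n)=P(x_1+\cdots+x_{i_1},\,x_{i_1+1}+\cdots+x_{i_1+i_2},\dots)\,Q_1(x_1,\dots,x_{i_1})\,Q_2(x_{i_1+1},\dots,x_{i_1+i_2})\cdots$$ for $P\in\mathcal{Q}_k$, $Q_r\in\mathcal{Q}_{i_r}$, $n=i_1+\cdots+i_k$. Under this isomorphism the $n$-ary operation $(a_1,\dots,a_n)\mapsto D^{j_1}(a_1)D^{j_2}(a_2)\cdots D^{j_n}(a_n)$ (i.e. $\mu_n\circ(D^{j_1},\dots,D^{j_n})$) corresponds to the monomial $x_1^{j_1}x_2^{j_2}\cdots x_n^{j_n}$; in particular $AsDer_n\cong\mathbb{K}[x_1,\dots,x_n]$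 as vector spaces.
   Context: $\mathbb{K}$ is a commutative unital ring (think of a field). A nonsymmetric (ns) operad is a family of vector spaces $(\mathcal{P}_n)_{n\ge1}$ with an element $\mathrm{id}\in\mathcal{P}_1$ and linear partial compositions $\circ_i:\mathcal{P}_m\otimes\mathcal{P}_n\to\mathcal{P}_{m+n-1}$ ($1\le i\le m$) such that $\mathrm{id}$ is a two-sided unit and (I) $(\lambda\circ_i\mu)\circ_{i-1+j}\nu=\lambda\circ_i(\mu\circ_j\nu)$ for $\lambda\in\mathcal{P}_l,\mu\in\mathcal{P}_m$, $1\le i\le l$, $1\le j\le m$; (II) $(\lambda\circ_i\mu)\circ_{k+m-1}\nu=(\lambda\circ_k\nu)\circ_i\mu$ for $1\le i<k\le l$. $AsDer$ denotes the ns operad generated by a unary operation $D$ and a binary operation $\mu$ subject to the relations $\mu\circ_1\mu=\mu\circ_2\mu$ (associativity) and $D\circ_1\mu=\mu\circ_1 D+\mu\circ_2 D$ (Leibniz rule); its algebras are (nonunital) associative algebras $A$ equipped with a derivation $D^A$, i.e. a linear map with $D^A(ab)=D^A(a)b+aD^A(b)$. $\mu_n$ denotes the $n$-ary operation obtained by composing $n-1$ copies of $\mu$ ($\mu_1=\mathrm{id}$). *)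

theory Defs
  imports "HOL-Library.Poly_Mapping"
begin

text \<open>An ns operad of K-modules is given by: a type 'b with an abelian group structure and a
  scalar multiplication sc by the coefficient ring 'k (a K-module), arity components C n
  (submodules of 'b, only n \<ge> 1 matter), a unit e \<in> C 1 and partial compositions
  cmp m n i x y = x \<circ>_i y for x \<in> C m, y \<in> C n, 1 \<le> i \<le> m.
  The arities are passed explicitly, so components may share elements.\<close>

definition is_module_scalar :: "('k::comm_ring_1 \<Rightarrow> 'b::ab_group_add \<Rightarrow> 'b) \<Rightarrow> bool" where
  "is_module_scalar sc \<longleftrightarrow>
     (\<forall>a x y. sc a (x + y) = sc a x + sc a y) \<and>
     (\<forall>a b x. sc (a + b) x = sc a x + sc b x) \<and>
     (\<forall>a b x. sc (a * b) x = sc a (sc b x)) \<and>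
     (\<forall>x. sc 1 x = x)"

definition ns_operad ::
  "('k::comm_ring_1 \<Rightarrow> 'b::ab_group_add \<Rightarrow> 'b) \<Rightarrow> (nat \<Rightarrow> 'b set) \<Rightarrow> 'b
     \<Rightarrow> (nat \<Rightarrow> nat \<Rightarrow> nat \<Rightarrow> 'b \<Rightarrow> 'b \<Rightarrow> 'b) \<Rightarrow> bool" where
  "ns_operad sc C e cmp \<longleftrightarrow>
     is_module_scalar sc \<and>
     \<comment> \<open>each component is a submodule\<close>
     (\<forall>n\<ge>1. 0 \<in> C n \<and> (\<forall>x\<in>C n. \<forall>y\<in>C n. x + y \<in> C n) \<and> (\<forall>a. \<forall>x\<in>C n. sc a x \<in> C n)) \<and>
     \<comment> \<open>partial compositions are well typed and bilinear\<close>
     (\<forall>m\<ge>1. \<forall>n\<ge>1. \<forall>i. 1 \<le> i \<and> i \<le> m \<longrightarrow>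
        (\<forall>x\<in>C m. \<forall>y\<in>C n. cmp m n i x y \<in> C (m + n - 1)) \<and>
        (\<forall>x\<in>C m. \<forall>x'\<in>C m. \<forall>y\<in>C n. cmp m n i (x + x') y = cmp m n i x y + cmp m n i x' y) \<and>
        (\<forall>x\<in>C m. \<forall>y\<in>C n. \<forall>y'\<in>C n. cmp m n i x (y + y') = cmp m n i x y + cmp m n i x y') \<and>
        (\<forall>a. \<forall>x\<in>C m. \<forall>y\<in>C n. cmp m n i (sc a x) y = sc a (cmp m n i x y)) \<and>
        (\<forall>a. \<forall>x\<in>C m. \<forall>y\<in>C n. cmp m n i x (sc a y) = sc a (cmp m n i x y))) \<and>
     \<comment> \<open>unit\<close>
     e \<in> C 1 \<and>
     (\<forall>n\<ge>1. \<forall>y\<in>C n. cmp 1 n 1 e y = y) \<and>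
     (\<forall>m\<ge>1. \<forall>x\<in>C m. \<forall>i. 1 \<le> i \<and> i \<le> m \<longrightarrow> cmp m 1 i x e = x) \<and>
     \<comment> \<open>axiom (I)\<close>
     (\<forall>l\<ge>1. \<forall>m\<ge>1. \<forall>n\<ge>1. \<forall>x\<in>C l. \<forall>y\<in>C m. \<forall>z\<in>C n. \<forall>i j.
        1 \<le> i \<and> i \<le> l \<and> 1 \<le> j \<and> j \<le> m \<longrightarrow>
        cmp (l + m - 1) n (i - 1 + j) (cmp l m i x y) z = cmp l (m + n - 1) i x (cmp m n j y z)) \<and>
     \<comment> \<open>axiom (II)\<close>
     (\<forall>l\<ge>1. \<forall>m\<ge>1. \<forall>n\<ge>1. \<forall>x\<in>C l. \<forall>y\<in>C m. \<forall>z\<in>C n. \<forall>i k.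
        1 \<le> i \<and> i < k \<and> k \<le> l \<longrightarrow>
        cmp (l + m - 1) n (k + m - 1) (cmp l m i x y) z = cmp (l + n - 1) m i (cmp l n k x z) y)"

definition ns_operad_hom ::
  "('k::comm_ring_1 \<Rightarrow> 'a::ab_group_add \<Rightarrow> 'a) \<Rightarrow> (nat \<Rightarrow> 'a set) \<Rightarrow> 'a \<Rightarrow> (nat \<Rightarrow> nat \<Rightarrow> nat \<Rightarrow> 'a \<Rightarrow> 'a \<Rightarrow> 'a)
   \<Rightarrow> ('k \<Rightarrow> 'b::ab_group_add \<Rightarrow> 'b) \<Rightarrow> (nat \<Rightarrow> 'b set) \<Rightarrow> 'b \<Rightarrow> (nat \<Rightarrow> nat \<Rightarrow> nat \<Rightarrow> 'b \<Rightarrow> 'b \<Rightarrow> 'b)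
   \<Rightarrow> (nat \<Rightarrow> 'a \<Rightarrow> 'b) \<Rightarrow> bool" where
  "ns_operad_hom sc C e cmp sc' C' e' cmp' f \<longleftrightarrow>
     (\<forall>n\<ge>1. \<forall>x\<in>C n. f n x \<in> C' n) \<and>
     (\<forall>n\<ge>1. \<forall>x\<in>C n. \<forall>y\<in>C n. f n (x + y) = f n x + f n y) \<and>
     (\<forall>n\<ge>1. \<forall>a. \<forall>x\<in>C n. f n (sc a x) = sc' a (f n x)) \<and>
     f 1 e = e' \<and>
     (\<forall>m\<ge>1. \<forall>n\<ge>1. \<forall>i. 1 \<le> i \<and> i \<le> m \<longrightarrow>
        (\<forall>x\<in>C m. \<forall>y\<in>C n. f (m + n - 1) (cmp m n i x y) = cmp' m n i (f m x) (f n y)))"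

text \<open>The defining relations of AsDer for candidate images d (of D, arity 1) and
  m (of \<mu>, arity 2): associativity and the Leibniz rule.\<close>

definition asder_relations :: "(nat \<Rightarrow> nat \<Rightarrow> nat \<Rightarrow> 'b \<Rightarrow> 'b \<Rightarrow> 'b) \<Rightarrow> 'b \<Rightarrow> 'b::ab_group_add \<Rightarrow> bool" where
  "asder_relations cmp d m \<longleftrightarrow>
     cmp 2 2 1 m m = cmp 2 2 2 m m \<and>
     cmp 1 2 1 d m = cmp 2 1 1 m d + cmp 2 1 2 m d"

text \<open>AsDer is the ns operad presented by generators D (arity 1), \<mu> (arity 2) and these
  relations, i.e. it is characterised by its universal property.  "An ns operad P with elements
  d \<in> P_1, m \<in> P_2 is isomorphic to AsDer via D \<mapsto> d, \<mu> \<mapsto> m" means: the relations hold for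
  (d, m) and for every ns operad P' and d' \<in> P'_1, m' \<in> P'_2 satisfying the relations there is a
  unique morphism P \<rightarrow> P' with d \<mapsto> d', m \<mapsto> m'.  Since the target type 'b is a parameter,
  this is stated for the target type given as an argument (the theorem is schematic in it).\<close>

definition presents_AsDer ::
  "('k::comm_ring_1 \<Rightarrow> 'a::ab_group_add \<Rightarrow> 'a) \<Rightarrow> (nat \<Rightarrow> 'a set) \<Rightarrow> 'a \<Rightarrow> (nat \<Rightarrow> nat \<Rightarrow> nat \<Rightarrow> 'a \<Rightarrow> 'a \<Rightarrow> 'a)
   \<Rightarrow> 'a \<Rightarrow> 'a \<Rightarrow> 'b::ab_group_add itself \<Rightarrow> bool" where
  "presents_AsDer sc C e cmp d m _ \<longleftrightarrow>
     d \<in> C 1 \<and> m \<in> C 2 \<and> asder_relations cmp d m \<and>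
     (\<forall>(sc' :: 'k \<Rightarrow> 'b \<Rightarrow> 'b) C' e' cmp' d' m'.
        ns_operad sc' C' e' cmp' \<and> d' \<in> C' 1 \<and> m' \<in> C' 2 \<and> asder_relations cmp' d' m' \<longrightarrow>
        (\<exists>f. ns_operad_hom sc C e cmp sc' C' e' cmp' f \<and> f 1 d = d' \<and> f 2 m = m') \<and>
        (\<forall>f g. ns_operad_hom sc C e cmp sc' C' e' cmp' f \<and> f 1 d = d' \<and> f 2 m = m' \<and>
               ns_operad_hom sc C e cmp sc' C' e' cmp' g \<and> g 1 d = d' \<and> g 2 m = m' \<longrightarrow>
               (\<forall>n\<ge>1. \<forall>x\<in>C n. f n x = g n x)))"

text \<open>Full composition \<gamma>(P; Q_1,...,Q_k), obtained from partial compositions as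
  (\<dots>((P \<circ>_k Q_k) \<circ>_(k-1) Q_(k-1)) \<dots>) \<circ>_1 Q_1.  The list argument of full_comp_aux is the
  reversed list of (arity, element) pairs.\<close>

fun full_comp_aux :: "(nat \<Rightarrow> nat \<Rightarrow> nat \<Rightarrow> 'b \<Rightarrow> 'b \<Rightarrow> 'b) \<Rightarrow> nat \<Rightarrow> 'b \<Rightarrow> (nat \<times> 'b) list \<Rightarrow> 'b" where
  "full_comp_aux cmp a P [] = P"
| "full_comp_aux cmp a P ((m, Q) # qs) =
     full_comp_aux cmp (a + m - 1) (cmp a m (length qs + 1) P Q) qs"

definition full_comp :: "(nat \<Rightarrow> nat \<Rightarrow> nat \<Rightarrow> 'b \<Rightarrow> 'b \<Rightarrow> 'b) \<Rightarrow> nat \<Rightarrow> 'b \<Rightarrow> (nat \<times> 'b) list \<Rightarrow> 'b" where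
  "full_comp cmp k P qs = full_comp_aux cmp k P (rev qs)"

fun op_pow :: "(nat \<Rightarrow> nat \<Rightarrow> nat \<Rightarrow> 'b \<Rightarrow> 'b \<Rightarrow> 'b) \<Rightarrow> 'b \<Rightarrow> 'b \<Rightarrow> nat \<Rightarrow> 'b" where
  "op_pow cmp e d 0 = e"
| "op_pow cmp e d (Suc j) = cmp 1 1 1 d (op_pow cmp e d j)"

text \<open>\<mu>_1 = id, \<mu>_(n+1) = \<mu> \<circ>_2 \<mu>_n (so \<mu>_2 = \<mu>).  The value at 0 is irrelevant.\<close>
fun mu_n :: "(nat \<Rightarrow> nat \<Rightarrow> nat \<Rightarrow> 'b \<Rightarrow> 'b \<Rightarrow> 'b) \<Rightarrow> 'b \<Rightarrow> 'b \<Rightarrow> nat \<Rightarrow> 'b" where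
  "mu_n cmp e m 0 = e"
| "mu_n cmp e m (Suc 0) = e"
| "mu_n cmp e m (Suc (Suc n)) = cmp 2 (Suc n) 2 m (mu_n cmp e m (Suc n))"

text \<open>Polynomials over 'k in variables x_1, x_2, ... (variable index v \<ge> 1), represented
  as finitely supported maps from monomials (exponent maps a finitely supported map nat to nat) to coefficients.\<close>

type_synonym 'k mpoly = "(nat \<Rightarrow>\<^sub>0 nat) \<Rightarrow>\<^sub>0 'k"

definition Var :: "nat \<Rightarrow> 'k::comm_ring_1 mpoly" where
  "Var v = Poly_Mapping.single (Poly_Mapping.single v 1) 1"

definition Const :: "'k::comm_ring_1 \<Rightarrow> 'k mpoly" where
  "Const c = Poly_Mapping.single 0 c"

definition poly_smult :: "'k::comm_ring_1 \<Rightarrow> 'k mpoly \<Rightarrow> 'k mpoly" where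
  "poly_smult c p = Const c * p"

definition subst :: "(nat \<Rightarrow> 'k::comm_ring_1 mpoly) \<Rightarrow> 'k mpoly \<Rightarrow> 'k mpoly" where
  "subst \<sigma> p = (\<Sum>a\<in>Poly_Mapping.keys p.
      Const (Poly_Mapping.lookup p a) * (\<Prod>v\<in>Poly_Mapping.keys a. \<sigma> v ^ Poly_Mapping.lookup a v))"

definition Qc :: "nat \<Rightarrow> 'k::comm_ring_1 mpoly set" where
  "Qc n = {p. \<forall>a\<in>Poly_Mapping.keys p. \<forall>v\<in>Poly_Mapping.keys a. 1 \<le> v \<and> v \<le> n}"

definition Qcomp :: "nat \<Rightarrow> nat \<Rightarrow> nat \<Rightarrow> 'k::comm_ring_1 mpoly \<Rightarrow> 'k mpoly \<Rightarrow> 'k mpoly" where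
  "Qcomp n m i P Q =
     subst (\<lambda>v. if v < i then Var v
                else if v = i then (\<Sum>j\<in>{i..i + m - 1}. Var j)
                else Var (v + m - 1)) P
     * subst (\<lambda>v. Var (v + i - 1)) Q"

end

theory Submission
  imports Defs
begin

text \<open>
  Since
      P \<circ>_i Q is a product of two substitution instances, bilinearity and the unit laws are
      immediate, and axioms (I) and (II) reduce to identities between substitutions checked
      variable by variable (block_subst_nested, block_subst_commute, ...): theorem Q_operad.
  (2) In any ns operad with d, m satisfying the AsDer relations (locale asder_operad) the
      monomial operations Mon [j_1,...,j_n] = \<mu>_n \<circ> (D^j_1,...,D^j_n) satisfy: grafting D^k
      into input i adds k to j_i (Mon_D); grafting \<mu> into an input with exponent 0 doubles it
      (Mon_mu, by associativity); for higher exponents the Leibniz rule applies (cmp_mu_Mon_Suc).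
  (3) In Q, Mon js is the monomial x^js (Q_Mon), so these operations form a basis.  Hence the
      linear map lin_ext sending x^a to Mon a is the only possible morphism from Q, and by (2)
      it preserves grafting D^k, \<mu>, all monomial operations and finally everything
      (lin_ext_comp).
\<close>

section \<open>Substitution of polynomials\<close>

lemma Const_add: "Const (a + b) = Const a + Const (b::'k::comm_ring_1)"
  by (simp add: Const_def single_add)

lemma Const_mult: "Const (a * b) = Const a * Const (b::'k::comm_ring_1)"
  by (simp add: Const_def mult_single)

lemma Const_0 [simp]: "Const 0 = (0::'k::comm_ring_1 mpoly)"
  by (simp add: Const_def)

lemma Const_1 [simp]: "Const 1 = (1::'k::comm_ring_1 mpoly)"
  by (simp add: Const_def)

lemma Const_mult_single: "Const c * Poly_Mapping.single a 1 = Poly_Mapping.single a c"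
  by (simp add: Const_def mult_single)

lemma lookup_Const_mult: "Poly_Mapping.lookup (Const c * p) a = c * Poly_Mapping.lookup p a"
proof -
  have "Const c * p = Poly_Mapping.map ((*) c) p"
    by (simp add: Const_def mult_map_scale_conv_mult)
  then show ?thesis by (simp add: map.rep_eq when_def)
qed

lemma keys_Const_mult: "Poly_Mapping.keys (Const c * p) \<subseteq> Poly_Mapping.keys p"
  by (auto simp: in_keys_iff lookup_Const_mult)

lemma poly_mapping_sum_single:
  "p = (\<Sum>a\<in>Poly_Mapping.keys p. Poly_Mapping.single a (Poly_Mapping.lookup p a))"
  by (rule poly_mapping_eqI) (auto simp: lookup_sum lookup_single when_def in_keys_iff sum.delta)

definition subst_monomial :: "(nat \<Rightarrow> 'k::comm_ring_1 mpoly) \<Rightarrow> (nat \<Rightarrow>\<^sub>0 nat) \<Rightarrow> 'k mpoly" where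
  "subst_monomial \<sigma> a = (\<Prod>v\<in>Poly_Mapping.keys a. \<sigma> v ^ Poly_Mapping.lookup a v)"

lemma subst_monomial_superset:
  "finite S \<Longrightarrow> Poly_Mapping.keys a \<subseteq> S \<Longrightarrow>
   subst_monomial \<sigma> a = (\<Prod>v\<in>S. \<sigma> v ^ Poly_Mapping.lookup a v)"
  unfolding subst_monomial_def by (rule prod.mono_neutral_left) (auto simp: in_keys_iff)

lemma subst_monomial_add: "subst_monomial \<sigma> (a + b) = subst_monomial \<sigma> a * subst_monomial \<sigma> b"
proof -
  let ?S = "Poly_Mapping.keys a \<union> Poly_Mapping.keys b"
  have "subst_monomial \<sigma> (a + b) = (\<Prod>v\<in>?S. \<sigma> v ^ Poly_Mapping.lookup (a + b) v)"
    by (rule subst_monomial_superset) (auto simp: keys_add)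
  also have "\<dots> = (\<Prod>v\<in>?S. \<sigma> v ^ Poly_Mapping.lookup a v) * (\<Prod>v\<in>?S. \<sigma> v ^ Poly_Mapping.lookup b v)"
    by (simp add: lookup_add power_add prod.distrib)
  also have "\<dots> = subst_monomial \<sigma> a * subst_monomial \<sigma> b"
    by (simp add: subst_monomial_superset[symmetric])
  finally show ?thesis .
qed

lemma subst_monomial_0 [simp]: "subst_monomial \<sigma> 0 = 1"
  by (simp add: subst_monomial_def)

lemma subst_eq_sum_monomials:
  "subst \<sigma> p = (\<Sum>a\<in>Poly_Mapping.keys p. Const (Poly_Mapping.lookup p a) * subst_monomial \<sigma> a)"
  by (simp add: subst_def subst_monomial_def)

lemma subst_superset:
  "finite S \<Longrightarrow> Poly_Mapping.keys p \<subseteq> S \<Longrightarrow>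
   subst \<sigma> p = (\<Sum>a\<in>S. Const (Poly_Mapping.lookup p a) * subst_monomial \<sigma> a)"
  unfolding subst_eq_sum_monomials by (rule sum.mono_neutral_left) (auto simp: in_keys_iff)

lemma subst_0 [simp]: "subst \<sigma> 0 = 0"
  by (simp add: subst_def)

lemma subst_add: "subst \<sigma> (p + q) = subst \<sigma> p + subst \<sigma> q"
proof -
  let ?S = "Poly_Mapping.keys p \<union> Poly_Mapping.keys q"
  have "subst \<sigma> (p + q) = (\<Sum>a\<in>?S. Const (Poly_Mapping.lookup (p + q) a) * subst_monomial \<sigma> a)"
    by (rule subst_superset) (auto simp: keys_add)
  also have "\<dots> = (\<Sum>a\<in>?S. Const (Poly_Mapping.lookup p a) * subst_monomial \<sigma> a)
                + (\<Sum>a\<in>?S. Const (Poly_Mapping.lookup q a) * subst_monomial \<sigma> a)"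
    by (simp add: lookup_add Const_add distrib_right sum.distrib)
  also have "\<dots> = subst \<sigma> p + subst \<sigma> q"
    by (simp add: subst_superset[symmetric])
  finally show ?thesis .
qed

lemma subst_sum: "subst \<sigma> (\<Sum>x\<in>A. f x) = (\<Sum>x\<in>A. subst \<sigma> (f x))"
  by (induction A rule: infinite_finite_induct) (auto simp: subst_add)

lemma subst_single: "subst \<sigma> (Poly_Mapping.single a c) = Const c * subst_monomial \<sigma> a"
  by (simp add: subst_eq_sum_monomials)

lemma subst_mult: "subst \<sigma> (p * q) = subst \<sigma> p * subst \<sigma> q"
proof -
  let ?sp = "\<lambda>a. Poly_Mapping.single a (Poly_Mapping.lookup p a)"
  let ?sq = "\<lambda>b. Poly_Mapping.single b (Poly_Mapping.lookup q b)"
  have "p * q = (\<Sum>a\<in>Poly_Mapping.keys p. ?sp a) * (\<Sum>b\<in>Poly_Mapping.keys q. ?sq b)"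
    by (metis poly_mapping_sum_single)
  also have "\<dots> = (\<Sum>a\<in>Poly_Mapping.keys p. \<Sum>b\<in>Poly_Mapping.keys q. ?sp a * ?sq b)"
    by (simp add: sum_product)
  finally have "subst \<sigma> (p * q) =
      (\<Sum>a\<in>Poly_Mapping.keys p. \<Sum>b\<in>Poly_Mapping.keys q. subst \<sigma> (?sp a) * subst \<sigma> (?sq b))"
    by (simp add: subst_sum mult_single subst_single subst_monomial_add Const_mult mult_ac)
  also have "\<dots> = subst \<sigma> (\<Sum>a\<in>Poly_Mapping.keys p. ?sp a) * subst \<sigma> (\<Sum>b\<in>Poly_Mapping.keys q. ?sq b)"
    by (simp only: subst_sum sum_product)
  also have "\<dots> = subst \<sigma> p * subst \<sigma> q"
    by (metis poly_mapping_sum_single)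
  finally show ?thesis .
qed

lemma subst_Const [simp]: "subst \<sigma> (Const c) = Const c"
  by (simp add: Const_def subst_single)

lemma subst_1 [simp]: "subst \<sigma> 1 = 1"
  using subst_Const[of \<sigma> 1] by simp

lemma subst_Var [simp]: "subst \<sigma> (Var v) = \<sigma> v"
  by (simp add: Var_def subst_single subst_monomial_def)

lemma subst_prod: "subst \<sigma> (\<Prod>x\<in>A. f x) = (\<Prod>x\<in>A. subst \<sigma> (f x))"
  by (induction A rule: infinite_finite_induct) (auto simp: subst_mult)

lemma subst_power: "subst \<sigma> (p ^ k) = subst \<sigma> p ^ k"
  by (induction k) (auto simp: subst_mult)

lemma subst_subst: "subst \<sigma> (subst \<tau> p) = subst (\<lambda>v. subst \<sigma> (\<tau> v)) p"
proof -
  have "subst \<sigma> (subst_monomial \<tau> a) = subst_monomial (\<lambda>v. subst \<sigma> (\<tau> v)) a" for a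
    by (simp add: subst_monomial_def subst_prod subst_power)
  then show ?thesis
    by (simp add: subst_eq_sum_monomials[of \<tau>] subst_sum subst_mult)
       (simp add: subst_eq_sum_monomials)
qed

lemma subst_cong:
  "(\<And>a v. a \<in> Poly_Mapping.keys p \<Longrightarrow> v \<in> Poly_Mapping.keys a \<Longrightarrow> \<sigma> v = \<tau> v) \<Longrightarrow>
   subst \<sigma> p = subst \<tau> p"
  unfolding subst_def by (intro sum.cong refl arg_cong2[where f="(*)"] prod.cong) auto

text \<open>Monomials are products of powers of variables, so the identity substitution fixes p.\<close>

lemma Var_power: "Var v ^ k = (Poly_Mapping.single (Poly_Mapping.single v k) 1 :: 'k::comm_ring_1 mpoly)"
  by (induction k) (auto simp: Var_def mult_single single_add[symmetric] mult.commute)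

lemma prod_single_1:
  "(\<Prod>v\<in>S. Poly_Mapping.single (f v) (1::'k::comm_ring_1)) = Poly_Mapping.single (\<Sum>v\<in>S. f v) 1"
  by (induction S rule: infinite_finite_induct) (auto simp: mult_single)

lemma subst_Var_id [simp]: "subst Var p = p"
proof -
  have Var_monomial: "subst_monomial Var a = (Poly_Mapping.single a 1 :: 'k::comm_ring_1 mpoly)" for a
  proof -
    have "subst_monomial Var a = (Poly_Mapping.single
            (\<Sum>v\<in>Poly_Mapping.keys a. Poly_Mapping.single v (Poly_Mapping.lookup a v)) 1 :: 'k mpoly)"
      by (simp add: subst_monomial_def Var_power prod_single_1)
    then show ?thesis by (metis poly_mapping_sum_single)
  qed
  show ?thesis
    by (simp add: subst_eq_sum_monomials Var_monomial Const_mult_single)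
       (metis poly_mapping_sum_single)
qed

lemma subst_eq_self: "(\<And>v. \<sigma> v = Var v) \<Longrightarrow> subst \<sigma> p = p"
  by (metis subst_Var_id ext)

lemma Qc_0 [simp]: "0 \<in> Qc n"
  by (simp add: Qc_def)

lemma Qc_1 [simp]: "1 \<in> Qc n"
  by (simp add: Qc_def)

lemma Qc_Const [simp]: "Const c \<in> Qc n"
  by (simp add: Qc_def Const_def)

lemma Qc_Var [intro]: "1 \<le> v \<Longrightarrow> v \<le> n \<Longrightarrow> Var v \<in> Qc n"
  by (simp add: Qc_def Var_def)

lemma Qc_add [intro]: "p \<in> Qc n \<Longrightarrow> q \<in> Qc n \<Longrightarrow> p + q \<in> Qc n"
  unfolding Qc_def by (auto dest!: subsetD[OF keys_add])

lemma Qc_mult [intro]: "p \<in> Qc n \<Longrightarrow> q \<in> Qc n \<Longrightarrow> p * q \<in> Qc n"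
proof (unfold Qc_def, intro CollectI ballI)
  fix a v
  assume p: "p \<in> {p. \<forall>a\<in>Poly_Mapping.keys p. \<forall>v\<in>Poly_Mapping.keys a. 1 \<le> v \<and> v \<le> n}"
    and q: "q \<in> {p. \<forall>a\<in>Poly_Mapping.keys p. \<forall>v\<in>Poly_Mapping.keys a. 1 \<le> v \<and> v \<le> n}"
    and a: "a \<in> Poly_Mapping.keys (p * q)" and v: "v \<in> Poly_Mapping.keys a"
  from keys_mult[of p q] a obtain b c
    where "a = b + c" "b \<in> Poly_Mapping.keys p" "c \<in> Poly_Mapping.keys q" by blast
  with p q v keys_add[of b c] show "1 \<le> v \<and> v \<le> n" by auto
qed

lemma Qc_sum [intro]: "(\<And>x. x \<in> A \<Longrightarrow> f x \<in> Qc n) \<Longrightarrow> (\<Sum>x\<in>A. f x) \<in> Qc n"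
  by (induction A rule: infinite_finite_induct) auto

lemma Qc_prod [intro]: "(\<And>x. x \<in> A \<Longrightarrow> f x \<in> Qc n) \<Longrightarrow> (\<Prod>x\<in>A. f x) \<in> Qc n"
  by (induction A rule: infinite_finite_induct) auto

lemma Qc_power [intro]: "p \<in> Qc n \<Longrightarrow> p ^ k \<in> Qc n"
  by (induction k) auto

lemma Qc_smult [intro]: "p \<in> Qc n \<Longrightarrow> poly_smult c p \<in> Qc n"
  by (auto simp: poly_smult_def)

lemma Qc_keys: "p \<in> Qc n \<Longrightarrow> a \<in> Poly_Mapping.keys p \<Longrightarrow> Poly_Mapping.keys a \<subseteq> {1..n}"
  by (auto simp: Qc_def)

lemma Qc_subst:
  assumes p: "p \<in> Qc n" and \<sigma>: "\<And>v. 1 \<le> v \<Longrightarrow> v \<le> n \<Longrightarrow> \<sigma> v \<in> Qc m"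
  shows "subst \<sigma> p \<in> Qc m"
  unfolding subst_def
proof (intro Qc_sum Qc_mult Qc_Const Qc_prod Qc_power)
  fix a v assume "a \<in> Poly_Mapping.keys p" "v \<in> Poly_Mapping.keys a"
  with p have "1 \<le> v \<and> v \<le> n" by (auto simp: Qc_def)
  with \<sigma> show "\<sigma> v \<in> Qc m" by auto
qed

lemma subst_cong_Qc:
  "p \<in> Qc n \<Longrightarrow> (\<And>v. 1 \<le> v \<Longrightarrow> v \<le> n \<Longrightarrow> \<sigma> v = \<tau> v) \<Longrightarrow> subst \<sigma> p = subst \<tau> p"
  by (rule subst_cong) (auto simp: Qc_def)

section \<open>Q is an ns operad\<close>

definition block_subst :: "nat \<Rightarrow> nat \<Rightarrow> nat \<Rightarrow> 'k::comm_ring_1 mpoly" where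
  "block_subst m i v =
     (if v < i then Var v else if v = i then (\<Sum>t<m. Var (i + t)) else Var (v + m - 1))"

definition shift_subst :: "nat \<Rightarrow> nat \<Rightarrow> 'k::comm_ring_1 mpoly" where
  "shift_subst i v = Var (v + i - 1)"

lemma sum_block_shift: "1 \<le> (i::nat) \<Longrightarrow> sum f {i..i + m - 1} = (\<Sum>t<m. f (i + t))"
proof -
  assume "1 \<le> i"
  then have "{i..i + m - 1} = {0 + i..<m + i}" by auto
  then have "sum f {i..i + m - 1} = (\<Sum>t\<in>{0..<m}. f (t + i))"
    by (simp only: sum.shift_bounds_nat_ivl)
  then show ?thesis by (simp add: atLeast0LessThan add.commute)
qed

lemma Qcomp_eq:
  "1 \<le> i \<Longrightarrow> Qcomp n m i P Q = subst (block_subst m i) P * subst (shift_subst i) Q"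
  unfolding Qcomp_def block_subst_def shift_subst_def sum_block_shift[of i Var m, symmetric] ..

lemma sum_lessThan_add: "(\<Sum>t<a + (b::nat). f t) = (\<Sum>t<a. f t) + (\<Sum>t<b. f (a + t))"
  by (induction b) (auto simp: add_ac)

lemma Qcomp_Qc:
  assumes "x \<in> Qc l" "y \<in> Qc m" "1 \<le> i" "i \<le> l" "1 \<le> m"
  shows "Qcomp l m i x y \<in> Qc (l + m - 1)"
proof -
  have "subst (block_subst m i) x \<in> Qc (l + m - 1)"
    by (rule Qc_subst[OF assms(1)]) (use assms in \<open>auto simp: block_subst_def intro!: Qc_sum\<close>)
  moreover have "subst (shift_subst i) y \<in> Qc (l + m - 1)"
    by (rule Qc_subst[OF assms(2)]) (use assms in \<open>auto simp: shift_subst_def\<close>)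
  ultimately show ?thesis using assms by (simp add: Qcomp_eq Qc_mult)
qed

lemma Qcomp_add_left: "1 \<le> i \<Longrightarrow> Qcomp l m i (x + x') y = Qcomp l m i x y + Qcomp l m i x' y"
  by (simp add: Qcomp_eq subst_add distrib_right)

lemma Qcomp_add_right: "1 \<le> i \<Longrightarrow> Qcomp l m i x (y + y') = Qcomp l m i x y + Qcomp l m i x y'"
  by (simp add: Qcomp_eq subst_add distrib_left)

lemma Qcomp_smult_left: "1 \<le> i \<Longrightarrow> Qcomp l m i (poly_smult a x) y = poly_smult a (Qcomp l m i x y)"
  by (simp add: Qcomp_eq poly_smult_def subst_mult mult_ac)

lemma Qcomp_smult_right: "1 \<le> i \<Longrightarrow> Qcomp l m i x (poly_smult a y) = poly_smult a (Qcomp l m i x y)"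
  by (simp add: Qcomp_eq poly_smult_def subst_mult mult_ac)

lemma Qcomp_Qcomp_left:
  "1 \<le> i \<Longrightarrow> 1 \<le> p \<Longrightarrow> Qcomp L n p (Qcomp l m i x y) z =
     subst (\<lambda>v. subst (block_subst n p) (block_subst m i v)) x
     * subst (\<lambda>v. subst (block_subst n p) (shift_subst i v)) y * subst (shift_subst p) z"
  by (simp add: Qcomp_eq subst_mult subst_subst)

lemma Qcomp_Qcomp_right:
  "1 \<le> i \<Longrightarrow> 1 \<le> j \<Longrightarrow> Qcomp l M i x (Qcomp m n j y z) =
     subst (block_subst M i) x * subst (\<lambda>v. subst (shift_subst i) (block_subst n j v)) y
     * subst (\<lambda>v. subst (shift_subst i) (shift_subst j v)) z"
  by (simp add: Qcomp_eq subst_mult subst_subst mult_ac)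

text \<open>The substitution identities behind axiom (I), where z is grafted into the input
  p = i + j - 1 of x \<circ>_i y, which lies in the block of y: on x, the block of length m
  followed by a block of length n inside it is one block of length m + n - 1 ...\<close>

lemma block_subst_nested:
  assumes n: "1 \<le> n" and i: "1 \<le> i" and j: "1 \<le> j" "j \<le> m"
  shows "subst (block_subst n (i + j - 1)) (block_subst m i v) = (block_subst (m + n - 1) i v :: 'k::comm_ring_1 mpoly)"
proof -
  define p where "p = i + j - 1"
  have p: "i \<le> p" "p \<le> i + m - 1" "p = i + (j - 1)" using i j by (auto simp: p_def)
  consider "v < i" | "v = i" | "v > i" by linarith
  then have "subst (block_subst n p) (block_subst m i v) = (block_subst (m + n - 1) i v :: 'k mpoly)"
  proof cases
    case 1
    then show ?thesis using p by (simp add: block_subst_def)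
  next
    case 2
    have mm: "m = (j - 1) + Suc (m - j)" and mn: "m + n - 1 = (j - 1) + n + (m - j)"
      using j n by auto
    have "subst (block_subst n p) (block_subst m i v) = (\<Sum>t<m. block_subst n p (i + t) :: 'k mpoly)"
      using 2 by (simp add: block_subst_def subst_sum)
    also have "\<dots> = (\<Sum>t<j - 1. block_subst n p (i + t)) + block_subst n p p
                    + (\<Sum>t<m - j. block_subst n p (p + 1 + t))"
      by (subst mm, simp only: sum_lessThan_add sum.lessThan_Suc_shift) (simp add: p(3) add_ac)
    also have "\<dots> = (\<Sum>t<j - 1. Var (i + t)) + (\<Sum>t<n. Var (p + t)) + (\<Sum>t<m - j. Var (p + n + t))"
    proof -
      have "(\<Sum>t<j - 1. block_subst n p (i + t)) = (\<Sum>t<j - 1. Var (i + t) :: 'k mpoly)"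
        by (rule sum.cong) (auto simp: block_subst_def p(3))
      moreover have "(\<Sum>t<m - j. block_subst n p (p + 1 + t)) = (\<Sum>t<m - j. Var (p + n + t) :: 'k mpoly)"
        by (rule sum.cong) (auto simp: block_subst_def add_ac)
      ultimately show ?thesis by (simp add: block_subst_def)
    qed
    also have "\<dots> = (\<Sum>t<m + n - 1. Var (i + t))"
      by (subst mn, simp only: sum_lessThan_add) (simp add: p(3) add_ac)
    finally show ?thesis using 2 by (simp add: block_subst_def)
  next
    case 3
    then have "\<not> v + m - 1 < p" "v + m - 1 \<noteq> p" "v + m - 1 + n - 1 = v + (m + n - 1) - 1"
      using p j n by auto
    then show ?thesis using 3 by (simp add: block_subst_def)
  qed
  then show ?thesis by (simp add: p_def)
qed

text \<open>... on y, the block of length n appears at position j after shifting by i - 1 ...\<close>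

lemma block_subst_shift:
  assumes i: "1 \<le> i" and j: "1 \<le> j" and v: "1 \<le> v"
  shows "subst (block_subst n (i + j - 1)) (shift_subst i v) = (subst (shift_subst i) (block_subst n j v) :: 'k::comm_ring_1 mpoly)"
proof -
  consider "v < j" | "v = j" | "v > j" by linarith
  then show ?thesis
  proof cases
    case 1
    then have "v + i - 1 < i + j - 1" using i by auto
    then show ?thesis using 1 by (simp add: block_subst_def shift_subst_def)
  next
    case 2
    then have "subst (block_subst n (i + j - 1)) (shift_subst i v) = (\<Sum>t<n. Var (i + j - 1 + t) :: 'k mpoly)"
      by (simp add: block_subst_def shift_subst_def add.commute)
    also have "\<dots> = (\<Sum>t<n. Var (j + t + i - 1))"
      by (rule sum.cong) (use i j in \<open>auto simp: ac_simps\<close>)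
    also have "\<dots> = subst (shift_subst i) (block_subst n j v)"
      using 2 by (simp add: block_subst_def shift_subst_def subst_sum)
    finally show ?thesis .
  next
    case 3
    then have "\<not> v + i - 1 < i + j - 1" "v + i - 1 \<noteq> i + j - 1" "v + i - 1 + n - 1 = v + n - 1 + i - 1"
      using i j by auto
    then show ?thesis using 3 by (simp add: block_subst_def shift_subst_def)
  qed
qed

text \<open>... and on z, two shifts compose.\<close>

lemma shift_subst_shift:
  "1 \<le> i \<Longrightarrow> 1 \<le> j \<Longrightarrow> 1 \<le> v \<Longrightarrow>
   shift_subst (i + j - 1) v = (subst (shift_subst i) (shift_subst j v) :: 'k::comm_ring_1 mpoly)"
proof -
  assume "1 \<le> i" "1 \<le> j" "1 \<le> v"
  then have "v + (i + j - 1) - 1 = v + j - 1 + i - 1" by auto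
  then show ?thesis by (simp only: shift_subst_def subst_Var)
qed

lemma Qcomp_assoc_I:
  fixes x :: "'k::comm_ring_1 mpoly"
  assumes n: "1 \<le> n" and x: "x \<in> Qc l" and y: "y \<in> Qc m" and z: "z \<in> Qc n"
    and i: "1 \<le> i" and j: "1 \<le> j" "j \<le> m"
  shows "Qcomp (l + m - 1) n (i + j - 1) (Qcomp l m i x y) z = Qcomp l (m + n - 1) i x (Qcomp m n j y z)"
proof -
  have "Qcomp (l + m - 1) n (i + j - 1) (Qcomp l m i x y) z
      = subst (\<lambda>v. subst (block_subst n (i + j - 1)) (block_subst m i v)) x
        * subst (\<lambda>v. subst (block_subst n (i + j - 1)) (shift_subst i v)) y
        * subst (shift_subst (i + j - 1)) z"
    by (rule Qcomp_Qcomp_left) (use i j in auto)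
  also have "\<dots> = subst (block_subst (m + n - 1) i) x
      * subst (\<lambda>v. subst (shift_subst i) (block_subst n j v)) y
      * subst (\<lambda>v. subst (shift_subst i) (shift_subst j v)) z"
  proof -
    have "subst (\<lambda>v. subst (block_subst n (i + j - 1)) (block_subst m i v)) x = subst (block_subst (m + n - 1) i) x"
      by (rule subst_cong_Qc[OF x]) (rule block_subst_nested[OF n i j])
    moreover have "subst (\<lambda>v. subst (block_subst n (i + j - 1)) (shift_subst i v)) y
        = subst (\<lambda>v. subst (shift_subst i) (block_subst n j v)) y"
      by (rule subst_cong_Qc[OF y]) (rule block_subst_shift[OF i j(1)])
    moreover have "subst (shift_subst (i + j - 1)) z = subst (\<lambda>v. subst (shift_subst i) (shift_subst j v)) z"
      by (rule subst_cong_Qc[OF z]) (rule shift_subst_shift[OF i j(1)])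
    ultimately show ?thesis by simp
  qed
  also have "\<dots> = Qcomp l (m + n - 1) i x (Qcomp m n j y z)"
    by (rule Qcomp_Qcomp_right[symmetric]) (use i j in auto)
  finally show ?thesis .
qed

text \<open>The substitution identities behind axiom (II), where y and z are grafted into two
  different inputs i < k of x: the two block substitutions on x commute ...\<close>

lemma block_subst_commute:
  assumes m: "1 \<le> m" and n: "1 \<le> n" and ik: "1 \<le> i" "i < k"
  shows "subst (block_subst n (k + m - 1)) (block_subst m i v)
       = (subst (block_subst m i) (block_subst n k v) :: 'k::comm_ring_1 mpoly)"
proof -
  define q where "q = k + m - 1"
  have q: "i + m - 1 < q" using ik m by (auto simp: q_def)
  consider "v < i" | "v = i" | "i < v \<and> v < k" | "v = k" | "k < v" by linarith
  then have "subst (block_subst n q) (block_subst m i v) = (subst (block_subst m i) (block_subst n k v) :: 'k mpoly)"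
  proof cases
    case 1
    then have "v < q" "v < k" using q ik by auto
    then show ?thesis using 1 by (simp add: block_subst_def)
  next
    case 2
    have "subst (block_subst n q) (block_subst m i v) = (\<Sum>t<m. block_subst n q (i + t) :: 'k mpoly)"
      using 2 by (simp add: block_subst_def subst_sum)
    also have "\<dots> = (\<Sum>t<m. Var (i + t))"
      by (rule sum.cong) (use q in \<open>auto simp: block_subst_def\<close>)
    also have "\<dots> = subst (block_subst m i) (block_subst n k v)"
      using 2 ik by (simp add: block_subst_def)
    finally show ?thesis .
  next
    case 3
    then have "v + m - 1 < q" "\<not> v < i" "v \<noteq> i" using ik m by (auto simp: q_def)
    then show ?thesis using 3 by (simp add: block_subst_def)
  next
    case 4
    have "subst (block_subst n q) (block_subst m i v) = (\<Sum>t<n. Var (q + t) :: 'k mpoly)"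
      using 4 ik by (simp add: block_subst_def q_def)
    also have "\<dots> = (\<Sum>t<n. block_subst m i (k + t))"
      by (rule sum.cong) (use ik in \<open>auto simp: block_subst_def q_def ac_simps\<close>)
    also have "\<dots> = subst (block_subst m i) (block_subst n k v)"
      using 4 by (simp add: block_subst_def subst_sum)
    finally show ?thesis .
  next
    case 5
    then have "\<not> v + m - 1 < q" "v + m - 1 \<noteq> q" "\<not> v + n - 1 < i" "v + n - 1 \<noteq> i"
      "\<not> v < i" "v \<noteq> i" "\<not> v < k" "v \<noteq> k" "v + m - 1 + n - 1 = v + n - 1 + m - 1"
      using q ik m n by (auto simp: q_def)
    then show ?thesis by (simp add: block_subst_def)
  qed
  then show ?thesis by (simp add: q_def)
qed

text \<open>... y is untouched by the later block, and z is shifted past the block of y.\<close>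

lemma block_subst_shift_before:
  assumes "1 \<le> m" "i < k" "v \<le> m"
  shows "subst (block_subst n (k + m - 1)) (shift_subst i v) = (shift_subst i v :: 'k::comm_ring_1 mpoly)"
proof -
  have "v + i - 1 < k + m - 1" using assms by auto
  then show ?thesis by (simp add: block_subst_def shift_subst_def)
qed

lemma shift_subst_past_block:
  assumes "1 \<le> m" "i < k" "1 \<le> v"
  shows "shift_subst (k + m - 1) v = (subst (block_subst m i) (shift_subst k v) :: 'k::comm_ring_1 mpoly)"
proof -
  have "\<not> v + k - 1 < i" "v + k - 1 \<noteq> i" using assms by auto
  then have "subst (block_subst m i) (shift_subst k v) = (Var (v + k - 1 + m - 1) :: 'k mpoly)"
    by (simp add: block_subst_def shift_subst_def)
  moreover have "v + (k + m - 1) - 1 = v + k - 1 + m - 1" using assms by auto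
  ultimately show ?thesis by (simp only: shift_subst_def)
qed

lemma Qcomp_assoc_II:
  fixes x :: "'k::comm_ring_1 mpoly"
  assumes m: "1 \<le> m" and n: "1 \<le> n"
    and x: "x \<in> Qc l" and y: "y \<in> Qc m" and z: "z \<in> Qc n"
    and ik: "1 \<le> i" "i < k"
  shows "Qcomp (l + m - 1) n (k + m - 1) (Qcomp l m i x y) z = Qcomp (l + n - 1) m i (Qcomp l n k x z) y"
proof -
  have "Qcomp (l + m - 1) n (k + m - 1) (Qcomp l m i x y) z
      = subst (\<lambda>v. subst (block_subst n (k + m - 1)) (block_subst m i v)) x
        * subst (\<lambda>v. subst (block_subst n (k + m - 1)) (shift_subst i v)) y
        * subst (shift_subst (k + m - 1)) z"
    by (rule Qcomp_Qcomp_left) (use ik m in auto)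
  also have "\<dots> = subst (\<lambda>v. subst (block_subst m i) (block_subst n k v)) x
      * subst (\<lambda>v. subst (block_subst m i) (shift_subst k v)) z * subst (shift_subst i) y"
  proof -
    have "subst (\<lambda>v. subst (block_subst n (k + m - 1)) (block_subst m i v)) x
        = subst (\<lambda>v. subst (block_subst m i) (block_subst n k v)) x"
      by (rule subst_cong_Qc[OF x]) (rule block_subst_commute[OF m n ik])
    moreover have "subst (\<lambda>v. subst (block_subst n (k + m - 1)) (shift_subst i v)) y = subst (shift_subst i) y"
      by (rule subst_cong_Qc[OF y]) (rule block_subst_shift_before[OF m ik(2)])
    moreover have "subst (shift_subst (k + m - 1)) z = subst (\<lambda>v. subst (block_subst m i) (shift_subst k v)) z"
      by (rule subst_cong_Qc[OF z]) (rule shift_subst_past_block[OF m ik(2)])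
    ultimately show ?thesis by (simp add: mult_ac)
  qed
  also have "\<dots> = Qcomp (l + n - 1) m i (Qcomp l n k x z) y"
    by (rule Qcomp_Qcomp_left[symmetric]) (use ik in auto)
  finally show ?thesis .
qed

lemma poly_smult_module: "is_module_scalar (poly_smult :: 'k::comm_ring_1 \<Rightarrow> 'k mpoly \<Rightarrow> 'k mpoly)"
  unfolding is_module_scalar_def poly_smult_def
  by (simp add: Const_add Const_mult distrib_left distrib_right mult.assoc)

theorem Q_operad: "ns_operad (poly_smult :: 'k::comm_ring_1 \<Rightarrow> 'k mpoly \<Rightarrow> 'k mpoly) Qc 1 Qcomp"
  unfolding ns_operad_def
proof (intro conjI allI impI ballI poly_smult_module)
  fix n and y :: "'k mpoly"
  assume "y \<in> Qc n"
  show "Qcomp 1 n 1 1 y = y"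
    by (simp add: Qcomp_eq, rule subst_eq_self) (simp add: shift_subst_def)
next
  fix m i :: nat and x :: "'k mpoly"
  assume "1 \<le> i \<and> i \<le> m"
  moreover have "subst (block_subst 1 i) x = x"
    by (rule subst_eq_self) (simp add: block_subst_def)
  ultimately show "Qcomp m 1 i x 1 = x"
    by (simp add: Qcomp_eq)
qed (auto simp: Qcomp_add_left Qcomp_add_right Qcomp_smult_left Qcomp_smult_right
          intro: Qcomp_Qc[simplified] Qcomp_assoc_I[simplified] Qcomp_assoc_II[simplified])

locale operad =
  fixes sc :: "'k::comm_ring_1 \<Rightarrow> 'b::ab_group_add \<Rightarrow> 'b" and C :: "nat \<Rightarrow> 'b set"
    and e :: 'b and cmp :: "nat \<Rightarrow> nat \<Rightarrow> nat \<Rightarrow> 'b \<Rightarrow> 'b \<Rightarrow> 'b"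
  assumes operad: "ns_operad sc C e cmp"
begin

lemma sc_add_right: "sc a (x + y) = sc a x + sc a y"
  using operad by (simp add: ns_operad_def is_module_scalar_def)

lemma sc_add_left: "sc (a + b) x = sc a x + sc b x"
  using operad by (simp add: ns_operad_def is_module_scalar_def)

lemma sc_mult: "sc (a * b) x = sc a (sc b x)"
  using operad by (simp add: ns_operad_def is_module_scalar_def)

lemma sc_one [simp]: "sc 1 x = x"
  using operad by (simp add: ns_operad_def is_module_scalar_def)

lemma sc_zero [simp]: "sc a 0 = 0"
  using sc_add_right[of a 0 0] by simp

lemma sc_zero_scalar [simp]: "sc 0 x = 0"
  using sc_add_left[of 0 0 x] by simp

lemma sc_sum: "sc a (\<Sum>x\<in>A. f x) = (\<Sum>x\<in>A. sc a (f x))"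
  by (induction A rule: infinite_finite_induct) (auto simp: sc_add_right)

lemma zero_C: "1 \<le> n \<Longrightarrow> 0 \<in> C n"
  using operad by (simp add: ns_operad_def)

lemma add_C: "1 \<le> n \<Longrightarrow> x \<in> C n \<Longrightarrow> y \<in> C n \<Longrightarrow> x + y \<in> C n"
  using operad by (simp add: ns_operad_def)

lemma sc_C: "1 \<le> n \<Longrightarrow> x \<in> C n \<Longrightarrow> sc a x \<in> C n"
  using operad by (simp add: ns_operad_def)

lemma sum_C: "1 \<le> n \<Longrightarrow> (\<And>x. x \<in> A \<Longrightarrow> f x \<in> C n) \<Longrightarrow> (\<Sum>x\<in>A. f x) \<in> C n"
  by (induction A rule: infinite_finite_induct) (auto simp: zero_C add_C)

lemma unit_C: "e \<in> C 1"
  using operad by (simp add: ns_operad_def)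

text \<open>The operad axioms, with the resulting arities and indices as extra parameters so that
  they can be applied as rules to terms whose arithmetic is written differently.\<close>

lemma cmp_C:
  "1 \<le> m \<Longrightarrow> 1 \<le> n \<Longrightarrow> 1 \<le> i \<Longrightarrow> i \<le> m \<Longrightarrow> x \<in> C m \<Longrightarrow> y \<in> C n \<Longrightarrow>
   k = m + n - 1 \<Longrightarrow> cmp m n i x y \<in> C k"
  using operad unfolding ns_operad_def by simp

lemma cmp_add_left:
  "1 \<le> m \<Longrightarrow> 1 \<le> n \<Longrightarrow> 1 \<le> i \<Longrightarrow> i \<le> m \<Longrightarrow> x \<in> C m \<Longrightarrow> x' \<in> C m \<Longrightarrow> y \<in> C n \<Longrightarrow>
   cmp m n i (x + x') y = cmp m n i x y + cmp m n i x' y"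
  using operad unfolding ns_operad_def by simp

lemma cmp_add_right:
  "1 \<le> m \<Longrightarrow> 1 \<le> n \<Longrightarrow> 1 \<le> i \<Longrightarrow> i \<le> m \<Longrightarrow> x \<in> C m \<Longrightarrow> y \<in> C n \<Longrightarrow> y' \<in> C n \<Longrightarrow>
   cmp m n i x (y + y') = cmp m n i x y + cmp m n i x y'"
  using operad unfolding ns_operad_def by simp

lemma cmp_sc_left:
  "1 \<le> m \<Longrightarrow> 1 \<le> n \<Longrightarrow> 1 \<le> i \<Longrightarrow> i \<le> m \<Longrightarrow> x \<in> C m \<Longrightarrow> y \<in> C n \<Longrightarrow>
   cmp m n i (sc a x) y = sc a (cmp m n i x y)"
  using operad unfolding ns_operad_def by simp

lemma cmp_sc_right:
  "1 \<le> m \<Longrightarrow> 1 \<le> n \<Longrightarrow> 1 \<le> i \<Longrightarrow> i \<le> m \<Longrightarrow> x \<in> C m \<Longrightarrow> y \<in> C n \<Longrightarrow>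
   cmp m n i x (sc a y) = sc a (cmp m n i x y)"
  using operad unfolding ns_operad_def by simp

lemma unit_left: "1 \<le> n \<Longrightarrow> y \<in> C n \<Longrightarrow> cmp 1 n 1 e y = y"
  using operad unfolding ns_operad_def by simp

lemma unit_right: "1 \<le> m \<Longrightarrow> x \<in> C m \<Longrightarrow> 1 \<le> i \<Longrightarrow> i \<le> m \<Longrightarrow> cmp m 1 i x e = x"
  using operad unfolding ns_operad_def by simp

lemma assoc_I:
  "1 \<le> l \<Longrightarrow> 1 \<le> m \<Longrightarrow> 1 \<le> n \<Longrightarrow> x \<in> C l \<Longrightarrow> y \<in> C m \<Longrightarrow> z \<in> C n \<Longrightarrow>
   1 \<le> i \<Longrightarrow> i \<le> l \<Longrightarrow> 1 \<le> j \<Longrightarrow> j \<le> m \<Longrightarrow>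
   L = l + m - 1 \<Longrightarrow> p = i - 1 + j \<Longrightarrow> N = m + n - 1 \<Longrightarrow>
   cmp L n p (cmp l m i x y) z = cmp l N i x (cmp m n j y z)"
  using operad unfolding ns_operad_def by simp

lemma assoc_II:
  "1 \<le> l \<Longrightarrow> 1 \<le> m \<Longrightarrow> 1 \<le> n \<Longrightarrow> x \<in> C l \<Longrightarrow> y \<in> C m \<Longrightarrow> z \<in> C n \<Longrightarrow>
   1 \<le> i \<Longrightarrow> i < k \<Longrightarrow> k \<le> l \<Longrightarrow>
   L = l + m - 1 \<Longrightarrow> p = k + m - 1 \<Longrightarrow> L' = l + n - 1 \<Longrightarrow>
   cmp L n p (cmp l m i x y) z = cmp L' m i (cmp l n k x z) y"
  using operad unfolding ns_operad_def by simp

lemma cmp_zero_left: "1 \<le> m \<Longrightarrow> 1 \<le> n \<Longrightarrow> 1 \<le> i \<Longrightarrow> i \<le> m \<Longrightarrow> y \<in> C n \<Longrightarrow> cmp m n i 0 y = 0"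
  using cmp_add_left[of m n i 0 0 y] zero_C[of m] by simp

lemma cmp_zero_right: "1 \<le> m \<Longrightarrow> 1 \<le> n \<Longrightarrow> 1 \<le> i \<Longrightarrow> i \<le> m \<Longrightarrow> x \<in> C m \<Longrightarrow> cmp m n i x 0 = 0"
  using cmp_add_right[of m n i x 0 0] zero_C[of n] by simp

lemma cmp_sum_left:
  "1 \<le> m \<Longrightarrow> 1 \<le> n \<Longrightarrow> 1 \<le> i \<Longrightarrow> i \<le> m \<Longrightarrow> y \<in> C n \<Longrightarrow> (\<And>a. a \<in> A \<Longrightarrow> f a \<in> C m) \<Longrightarrow>
   cmp m n i (\<Sum>a\<in>A. f a) y = (\<Sum>a\<in>A. cmp m n i (f a) y)"
proof (induction A rule: infinite_finite_induct)
  case (insert a A)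
  then show ?case by (simp add: cmp_add_left sum_C)
qed (auto simp: cmp_zero_left)

lemma cmp_sum_right:
  "1 \<le> m \<Longrightarrow> 1 \<le> n \<Longrightarrow> 1 \<le> i \<Longrightarrow> i \<le> m \<Longrightarrow> x \<in> C m \<Longrightarrow> (\<And>a. a \<in> A \<Longrightarrow> f a \<in> C n) \<Longrightarrow>
   cmp m n i x (\<Sum>a\<in>A. f a) = (\<Sum>a\<in>A. cmp m n i x (f a))"
proof (induction A rule: infinite_finite_induct)
  case (insert a A)
  then show ?case by (simp add: cmp_add_right sum_C)
qed (auto simp: cmp_zero_right)

end

section \<open>Monomial operations in an operad with a derivation-like pair\<close>

text \<open>Arities are written as numerals and sums n + 1; for the arity bookkeeping below the
  simplifier keeps 1 as a numeral and normalises Suc n to n + 1.\<close>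

declare One_nat_def [simp del] Suc_eq_plus1 [simp]

text \<open>der_monomial [j_1,...,j_n] = \<mu>_n \<circ> (D^j_1,...,D^j_n), i.e. the operation
  (a_1,...,a_n) \<mapsto> D^j_1(a_1) \<cdots> D^j_n(a_n): a single factor is D^j, and j # ks is obtained
  by grafting der_monomial ks into the second input of \<mu> and D^j into the first one.\<close>

fun der_monomial :: "(nat \<Rightarrow> nat \<Rightarrow> nat \<Rightarrow> 'b \<Rightarrow> 'b \<Rightarrow> 'b) \<Rightarrow> 'b \<Rightarrow> 'b \<Rightarrow> 'b \<Rightarrow> nat list \<Rightarrow> 'b" where
  "der_monomial cmp e d m [] = e"
| "der_monomial cmp e d m [j] = op_pow cmp e d j"
| "der_monomial cmp e d m (j # k # ks) =
     cmp (Suc (Suc (length ks))) 1 1 (cmp 2 (Suc (length ks)) 2 m (der_monomial cmp e d m (k # ks)))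
       (op_pow cmp e d j)"

locale asder_operad = operad sc C e cmp
  for sc :: "'k::comm_ring_1 \<Rightarrow> 'b::ab_group_add \<Rightarrow> 'b" and C e cmp +
  fixes d m
  assumes d_C: "d \<in> C 1" and m_C: "m \<in> C 2" and relations: "asder_relations cmp d m"
begin

abbreviation D :: "nat \<Rightarrow> 'b" where "D j \<equiv> op_pow cmp e d j"
abbreviation Mon :: "nat list \<Rightarrow> 'b" where "Mon js \<equiv> der_monomial cmp e d m js"

lemma m_assoc: "cmp 2 2 1 m m = cmp 2 2 2 m m"
  using relations by (simp add: asder_relations_def)

lemma leibniz: "cmp 1 2 1 d m = cmp 2 1 1 m d + cmp 2 1 2 m d"
  using relations by (simp add: asder_relations_def)

lemma D_Suc: "D (j + 1) = cmp 1 1 1 d (D j)"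
  using op_pow.simps(2)[of cmp e d j] by simp

lemma D_C: "D j \<in> C 1"
  by (induction j) (auto simp: unit_C D_Suc intro!: cmp_C d_C)

lemma D_add: "cmp 1 1 1 (D j) (D k) = D (j + k)"
proof (induction j)
  case 0
  show ?case by (simp add: unit_left D_C)
next
  case (Suc j)
  have "cmp 1 1 1 (D (Suc j)) (D k) = cmp 1 1 1 d (cmp 1 1 1 (D j) (D k))"
    by (simp only: op_pow.simps, rule assoc_I) (auto simp: d_C D_C)
  also have "\<dots> = D (Suc (j + k))"
    using Suc by (simp only: op_pow.simps)
  finally show ?case by (simp only: add_Suc)
qed

lemma D_1: "D 1 = d"
  using D_Suc[of 0] unit_right[OF _ d_C, of 1] by simp

lemma Mon_Cons: "ks \<noteq> [] \<Longrightarrow>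
  Mon (j # ks) = cmp (length ks + 1) 1 1 (cmp 2 (length ks) 2 m (Mon ks)) (D j)"
  by (cases ks) auto

lemma Mon_C: "js \<noteq> [] \<Longrightarrow> Mon js \<in> C (length js)"
proof (induction js)
  case (Cons j ks)
  show ?case
  proof (cases "ks = []")
    case True
    then show ?thesis by (simp add: D_C)
  next
    case False
    with Cons.IH have "cmp 2 (length ks) 2 m (Mon ks) \<in> C (length ks + 1)"
      by (intro cmp_C[OF _ _ _ _ m_C]) (auto simp: Suc_le_eq neq_Nil_conv)
    with False show ?thesis
      by (simp add: Mon_Cons, intro cmp_C[OF _ _ _ _ _ D_C]) auto
  qed
qed simp

lemma Mon_D:
  "N = length pre + length post + 1 \<Longrightarrow> i = length pre + 1 \<Longrightarrow>
   cmp N 1 i (Mon (pre @ j # post)) (D k) = Mon (pre @ (j + k) # post)"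
proof (induction pre arbitrary: N i)
  case Nil
  show ?case
  proof (cases post)
    case Nil
    then show ?thesis using Nil.prems by (simp add: D_add)
  next
    case (Cons q post')
    let ?X = "cmp 2 (length post) 2 m (Mon post)"
    have X: "?X \<in> C (length post + 1)"
      by (rule cmp_C[OF _ _ _ _ m_C Mon_C]) (auto simp: Cons)
    have "cmp N 1 i (Mon ([] @ j # post)) (D k)
        = cmp (length post + 1) 1 1 (cmp (length post + 1) 1 1 ?X (D j)) (D k)"
      using Nil.prems Cons by (simp add: Mon_Cons)
    also have "\<dots> = cmp (length post + 1) 1 1 ?X (cmp 1 1 1 (D j) (D k))"
      by (rule assoc_I[OF _ _ _ X D_C D_C]) auto
    also have "\<dots> = Mon ([] @ (j + k) # post)"
      using Cons by (simp add: Mon_Cons D_add)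
    finally show ?thesis .
  qed
next
  case (Cons p pre')
  let ?rest = "pre' @ j # post"
  let ?Y = "cmp 2 (length ?rest) 2 m (Mon ?rest)"
  have Y: "?Y \<in> C N"
    by (rule cmp_C[OF _ _ _ _ m_C Mon_C]) (auto simp: Cons.prems)
  have "cmp N 1 i (Mon ((p # pre') @ j # post)) (D k) = cmp N 1 i (cmp N 1 1 ?Y (D p)) (D k)"
    using Cons.prems by (simp add: Mon_Cons ac_simps)
  also have "\<dots> = cmp N 1 1 (cmp N 1 i ?Y (D k)) (D p)"
    by (rule assoc_II[OF _ _ _ Y D_C D_C]) (auto simp: Cons.prems)
  also have "cmp N 1 i ?Y (D k) = cmp 2 (length ?rest) 2 m (cmp (length ?rest) 1 (length pre' + 1) (Mon ?rest) (D k))"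
    by (rule assoc_I[OF _ _ _ m_C Mon_C D_C]) (auto simp: Cons.prems)
  also have "cmp (length ?rest) 1 (length pre' + 1) (Mon ?rest) (D k) = Mon (pre' @ (j + k) # post)"
    by (rule Cons.IH) auto
  also have "cmp N 1 1 (cmp 2 (length ?rest) 2 m (Mon (pre' @ (j + k) # post))) (D p)
      = Mon ((p # pre') @ (j + k) # post)"
    using Cons.prems by (simp add: Mon_Cons ac_simps)
  finally show ?case .
qed

text \<open>Grafting \<mu> into an input with exponent 0 splits it into two inputs with exponent 0;
  this is where associativity of m is used.\<close>

lemma Mon_mu:
  "N = length pre + length post + 1 \<Longrightarrow> i = length pre + 1 \<Longrightarrow>
   cmp N 2 i (Mon (pre @ 0 # post)) m = Mon (pre @ 0 # 0 # post)"
proof (induction pre arbitrary: N i)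
  case Nil
  show ?case
  proof (cases post)
    case Nil
    have "cmp 2 1 2 m e = m" "cmp 2 1 1 m e = m"
      by (auto intro: unit_right[OF _ m_C])
    then show ?thesis using Nil Nil.prems by (simp add: unit_left m_C)
  next
    case (Cons q post')
    let ?n = "length post"
    let ?Y = "cmp 2 ?n 2 m (Mon post)"
    have n: "1 \<le> ?n" by (simp add: Cons)
    have R: "Mon post \<in> C ?n" by (rule Mon_C) (simp add: Cons)
    have Y: "?Y \<in> C (?n + 1)" by (rule cmp_C[OF _ _ _ _ m_C R]) (auto simp: n)
    have Y2: "cmp 2 (?n + 1) 2 m ?Y \<in> C (?n + 2)" by (rule cmp_C[OF _ _ _ _ m_C Y]) auto
    have "cmp N 2 i (Mon ([] @ 0 # post)) m = cmp (?n + 1) 2 1 ?Y m"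
      using Nil.prems Cons Y by (simp add: Mon_Cons unit_right)
    also have "\<dots> = cmp 3 ?n 3 (cmp 2 2 1 m m) (Mon post)"
      by (rule assoc_II[OF _ _ _ m_C m_C R, symmetric]) (auto simp: n)
    also have "\<dots> = cmp 3 ?n 3 (cmp 2 2 2 m m) (Mon post)"
      by (simp add: m_assoc)
    also have "\<dots> = cmp 2 (?n + 1) 2 m ?Y"
      by (rule assoc_I[OF _ _ _ m_C m_C R]) (auto simp: n)
    also have "\<dots> = Mon ([] @ 0 # 0 # post)"
      using Cons Y Y2 by (simp add: Mon_Cons unit_right ac_simps)
    finally show ?thesis .
  qed
next
  case (Cons p pre')
  let ?rest = "pre' @ 0 # post"
  let ?Y = "cmp 2 (length ?rest) 2 m (Mon ?rest)"
  have Y: "?Y \<in> C N" by (rule cmp_C[OF _ _ _ _ m_C Mon_C]) (auto simp: Cons.prems)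
  have "cmp N 2 i (Mon ((p # pre') @ 0 # post)) m = cmp N 2 i (cmp N 1 1 ?Y (D p)) m"
    using Cons.prems by (simp add: Mon_Cons ac_simps)
  also have "\<dots> = cmp (N + 1) 1 1 (cmp N 2 i ?Y m) (D p)"
    by (rule assoc_II[OF _ _ _ Y D_C m_C]) (auto simp: Cons.prems)
  also have "cmp N 2 i ?Y m = cmp 2 (length ?rest + 1) 2 m (cmp (length ?rest) 2 (length pre' + 1) (Mon ?rest) m)"
    by (rule assoc_I[OF _ _ _ m_C Mon_C m_C]) (auto simp: Cons.prems)
  also have "cmp (length ?rest) 2 (length pre' + 1) (Mon ?rest) m = Mon (pre' @ 0 # 0 # post)"
    by (rule Cons.IH) auto
  also have "cmp (N + 1) 1 1 (cmp 2 (length ?rest + 1) 2 m (Mon (pre' @ 0 # 0 # post))) (D p)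
      = Mon ((p # pre') @ 0 # 0 # post)"
    using Cons.prems by (simp add: Mon_Cons ac_simps)
  finally show ?case .
qed

lemma leibniz_slot:
  assumes "1 \<le> n" "X \<in> C n" "1 \<le> i" "i \<le> n"
  shows "cmp n 2 i (cmp n 1 i X d) m
       = cmp (n + 1) 1 i (cmp n 2 i X m) d + cmp (n + 1) 1 (i + 1) (cmp n 2 i X m) d"
proof -
  have md: "cmp 2 1 1 m d \<in> C 2" "cmp 2 1 2 m d \<in> C 2"
    by (auto intro: cmp_C[OF _ _ _ _ m_C d_C])
  have "cmp n 2 i (cmp n 1 i X d) m = cmp n 2 i X (cmp 1 2 1 d m)"
    by (rule assoc_I[OF _ _ _ assms(2) d_C m_C]) (use assms in auto)
  also have "\<dots> = cmp n 2 i X (cmp 2 1 1 m d) + cmp n 2 i X (cmp 2 1 2 m d)"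
    by (simp add: leibniz, rule cmp_add_right[OF _ _ _ _ assms(2) md]) (use assms in auto)
  also have "cmp n 2 i X (cmp 2 1 1 m d) = cmp (n + 1) 1 i (cmp n 2 i X m) d"
    by (rule assoc_I[OF _ _ _ assms(2) m_C d_C, symmetric]) (use assms in auto)
  also have "cmp n 2 i X (cmp 2 1 2 m d) = cmp (n + 1) 1 (i + 1) (cmp n 2 i X m) d"
    by (rule assoc_I[OF _ _ _ assms(2) m_C d_C, symmetric]) (use assms in auto)
  finally show ?thesis .
qed

text \<open>Raising the exponent of input i by one and then grafting \<mu> there: by the Leibniz rule
  this is the sum of the two ways of applying d to one of the two new inputs.\<close>

lemma cmp_mu_Mon_Suc:
  assumes len: "N = length pre + length post + 1" and i: "i = length pre + 1"
  shows "cmp N 2 i (Mon (pre @ (j + 1) # post)) m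
       = cmp (N + 1) 1 i (cmp N 2 i (Mon (pre @ j # post)) m) d
         + cmp (N + 1) 1 (i + 1) (cmp N 2 i (Mon (pre @ j # post)) m) d"
proof -
  have X: "Mon (pre @ j # post) \<in> C N"
    using Mon_C[of "pre @ j # post"] len by (simp add: add.assoc)
  have "Mon (pre @ (j + 1) # post) = cmp N 1 i (Mon (pre @ j # post)) d"
    using Mon_D[OF len i, of j 1] by (simp add: D_1)
  then show ?thesis
    using leibniz_slot[OF _ X] len i by simp
qed

lemma cmp_Mon_Cons:
  assumes ks: "ks \<noteq> []" and N: "1 \<le> N" and i: "1 \<le> i" "i \<le> N" and P: "P \<in> C N"
  shows "cmp N (length ks + 1) i P (Mon (k # ks))
       = cmp (N + length ks) 1 i (cmp (N + 1) (length ks) (i + 1) (cmp N 2 i P m) (Mon ks)) (D k)"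
proof -
  let ?n = "length ks"
  have n: "1 \<le> ?n" using ks by (cases ks) auto
  have R: "Mon ks \<in> C ?n" by (rule Mon_C[OF ks])
  have W: "cmp 2 ?n 2 m (Mon ks) \<in> C (?n + 1)"
    by (rule cmp_C[OF _ _ _ _ m_C R]) (use n in auto)
  have "cmp N (?n + 1) i P (Mon (k # ks)) = cmp N (?n + 1) i P (cmp (?n + 1) 1 1 (cmp 2 ?n 2 m (Mon ks)) (D k))"
    by (simp add: Mon_Cons[OF ks])
  also have "\<dots> = cmp (N + ?n) 1 i (cmp N (?n + 1) i P (cmp 2 ?n 2 m (Mon ks))) (D k)"
    by (rule assoc_I[symmetric, OF _ _ _ P W D_C]) (use N i n in auto)
  also have "cmp N (?n + 1) i P (cmp 2 ?n 2 m (Mon ks)) = cmp (N + 1) ?n (i + 1) (cmp N 2 i P m) (Mon ks)"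
    by (rule assoc_I[symmetric, OF _ _ _ P m_C R]) (use N i n in auto)
  finally show ?thesis .
qed

lemma Mon_1: "Mon [1] = d"
  by (simp add: D_1)

lemma Mon_0_0: "Mon [0, 0] = m"
proof -
  have "cmp 2 1 2 m e = m" "cmp 2 1 1 m e = m"
    by (auto intro: unit_right[OF _ m_C])
  then show ?thesis by (simp add:)
qed

end

section \<open>The monomial operations of Q form a basis\<close>

text \<open>In Q the elements x_1 (for D) and 1 \<in> Q_2 (for \<mu>) satisfy the AsDer relations;
  the Leibniz rule is x_1 \<circ>_1 1 = x_1 + x_2 = 1 \<circ>_1 x_1 + 1 \<circ>_2 x_1.\<close>

lemma Q_asder_operad:
  "asder_operad (poly_smult :: 'k::comm_ring_1 \<Rightarrow> 'k mpoly \<Rightarrow> 'k mpoly) Qc 1 Qcomp (Var 1) 1"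
proof (unfold_locales)
  show "ns_operad (poly_smult :: 'k \<Rightarrow> 'k mpoly \<Rightarrow> 'k mpoly) Qc 1 Qcomp"
    by (rule Q_operad)
  show "Var 1 \<in> Qc 1" by auto
  show "(1 :: 'k mpoly) \<in> Qc 2" by simp
  have "Qcomp 1 2 1 (Var 1) 1 = (Var 1 + Var 2 :: 'k mpoly)"
    by (simp add: Qcomp_eq block_subst_def numeral_2_eq_2 del: Suc_eq_plus1)
  moreover have "Qcomp 2 1 1 1 (Var 1) = (Var 1 :: 'k mpoly)"
    by (simp add: Qcomp_eq shift_subst_def)
  moreover have "Qcomp 2 1 2 1 (Var 1) = (Var 2 :: 'k mpoly)"
    by (simp add: Qcomp_eq shift_subst_def)
  moreover have "Qcomp 2 2 1 1 1 = (Qcomp 2 2 2 1 1 :: 'k mpoly)"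
    by (simp add: Qcomp_eq)
  ultimately show "asder_relations Qcomp (Var 1) (1 :: 'k mpoly)"
    by (simp add: asder_relations_def)
qed

interpretation Q: asder_operad "poly_smult :: 'k::comm_ring_1 \<Rightarrow> 'k mpoly \<Rightarrow> 'k mpoly" Qc 1 Qcomp "Var 1" 1
  by (rule Q_asder_operad)

lemma Qcomp_unary: "Qcomp n 1 1 X Y = X * (Y :: 'k::comm_ring_1 mpoly)"
proof -
  have "subst (block_subst 1 1) X = X"
    by (rule subst_eq_self) (auto simp: block_subst_def)
  moreover have "subst (shift_subst 1) Y = Y"
    by (rule subst_eq_self) (simp add: shift_subst_def)
  ultimately show ?thesis by (simp add: Qcomp_eq)
qed

lemma Q_D: "Q.D j = (Var 1 ^ j :: 'k::comm_ring_1 mpoly)"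
  by (induction j) (auto simp: Q.D_Suc Qcomp_unary power_add mult.commute)

lemma Q_Mon: "js \<noteq> [] \<Longrightarrow> Q.Mon js = (\<Prod>r<length js. Var (r + 1) ^ (js ! r) :: 'k::comm_ring_1 mpoly)"
proof (induction js)
  case (Cons j ks)
  show ?case
  proof (cases "ks = []")
    case True
    then show ?thesis by (simp add: Q_D)
  next
    case False
    then have "Q.Mon (j # ks) = subst (shift_subst 2) (Q.Mon ks) * (Var 1 ^ j :: 'k mpoly)"
      by (simp add: Q.Mon_Cons Qcomp_unary Qcomp_eq Q_D)
    also have "\<dots> = subst (shift_subst 2) (\<Prod>r<length ks. Var (r + 1) ^ (ks ! r)) * Var 1 ^ j"
      by (simp only: Cons.IH[OF False])
    also have "\<dots> = (\<Prod>r<length ks. Var (r + 2) ^ (ks ! r)) * Var 1 ^ j"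
      by (simp add: subst_prod subst_power shift_subst_def)
    also have "\<dots> = (\<Prod>r<length (j # ks). Var (r + 1) ^ ((j # ks) ! r))"
      by (simp only: prod.lessThan_Suc_shift length_Cons nth_Cons_Suc nth_Cons_0 mult.commute)
         simp
    finally show ?thesis .
  qed
qed simp

definition exps_monomial :: "nat list \<Rightarrow> (nat \<Rightarrow>\<^sub>0 nat)" where
  "exps_monomial js = (\<Sum>r<length js. Poly_Mapping.single (r + 1) (js ! r))"

definition exps_of :: "nat \<Rightarrow> (nat \<Rightarrow>\<^sub>0 nat) \<Rightarrow> nat list" where
  "exps_of n a = map (Poly_Mapping.lookup a) [1..<n + 1]"

lemma length_exps_of [simp]: "length (exps_of n a) = n"
  by (simp add: exps_of_def)

lemma exps_of_nonempty: "1 \<le> n \<Longrightarrow> exps_of n a \<noteq> []"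
  by (auto simp: exps_of_def)

lemma lookup_exps_monomial:
  "Poly_Mapping.lookup (exps_monomial js) v = (if 1 \<le> v \<and> v \<le> length js then js ! (v - 1) else 0)"
proof -
  have "Poly_Mapping.lookup (exps_monomial js) v = (\<Sum>r<length js. if r = v - 1 \<and> 1 \<le> v then js ! r else 0)"
    unfolding exps_monomial_def lookup_sum
    by (rule sum.cong) (auto simp: lookup_single when_def)
  also have "\<dots> = (if 1 \<le> v \<and> v \<le> length js then js ! (v - 1) else 0)"
    by (cases "1 \<le> v") (auto simp: sum.delta')
  finally show ?thesis .
qed

lemma exps_of_exps_monomial: "length js = n \<Longrightarrow> exps_of n (exps_monomial js) = js"
  by (rule nth_equalityI) (auto simp: exps_of_def lookup_exps_monomial nth_append)

lemma exps_monomial_exps_of: "Poly_Mapping.keys a \<subseteq> {1..n} \<Longrightarrow> exps_monomial (exps_of n a) = a"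
  by (rule poly_mapping_eqI) (auto simp: lookup_exps_monomial exps_of_def in_keys_iff)

lemma Q_Mon_single:
  "js \<noteq> [] \<Longrightarrow> Q.Mon js = (Poly_Mapping.single (exps_monomial js) 1 :: 'k::comm_ring_1 mpoly)"
  by (simp add: Q_Mon exps_monomial_def Var_power prod_single_1)

lemma Q_Mon_expansion:
  assumes n: "1 \<le> n" and p: "p \<in> Qc n"
  shows "p = (\<Sum>a\<in>Poly_Mapping.keys p. poly_smult (Poly_Mapping.lookup p a) (Q.Mon (exps_of n a)))"
proof -
  have "(\<Sum>a\<in>Poly_Mapping.keys p. poly_smult (Poly_Mapping.lookup p a) (Q.Mon (exps_of n a)))
      = (\<Sum>a\<in>Poly_Mapping.keys p. Poly_Mapping.single a (Poly_Mapping.lookup p a))"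
    by (intro sum.cong refl)
       (simp add: Q_Mon_single exps_of_nonempty[OF n] exps_monomial_exps_of[OF Qc_keys[OF p]]
                  poly_smult_def Const_mult_single)
  then show ?thesis by (metis poly_mapping_sum_single)
qed

section \<open>The universal property of Q\<close>

context
  fixes f and sc :: "'k::comm_ring_1 \<Rightarrow> 'b::ab_group_add \<Rightarrow> 'b" and C e cmp
  assumes hom: "ns_operad_hom poly_smult Qc 1 Qcomp sc C e cmp f"
begin

lemma hom_add: "1 \<le> n \<Longrightarrow> x \<in> Qc n \<Longrightarrow> y \<in> Qc n \<Longrightarrow> f n (x + y) = f n x + f n y"
  using hom unfolding ns_operad_hom_def by simp

lemma hom_smult: "1 \<le> n \<Longrightarrow> x \<in> Qc n \<Longrightarrow> f n (poly_smult a x) = sc a (f n x)"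
  using hom unfolding ns_operad_hom_def by simp

lemma hom_unit: "f 1 1 = e"
  using hom unfolding ns_operad_hom_def by simp

lemma hom_comp:
  "1 \<le> a \<Longrightarrow> 1 \<le> b \<Longrightarrow> 1 \<le> i \<Longrightarrow> i \<le> a \<Longrightarrow> x \<in> Qc a \<Longrightarrow> y \<in> Qc b \<Longrightarrow>
   f (a + b - 1) (Qcomp a b i x y) = cmp a b i (f a x) (f b y)"
  using hom unfolding ns_operad_hom_def by simp

lemma hom_zero: "1 \<le> n \<Longrightarrow> f n 0 = 0"
  using hom_add[of n 0 0] by simp

lemma hom_sum: "1 \<le> n \<Longrightarrow> (\<And>a. a \<in> A \<Longrightarrow> g a \<in> Qc n) \<Longrightarrow> f n (\<Sum>a\<in>A. g a) = (\<Sum>a\<in>A. f n (g a))"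
  by (induction A rule: infinite_finite_induct) (auto simp: hom_zero hom_add Qc_sum)

end

lemma split_at_slot:
  assumes "1 \<le> i" "i \<le> length js"
  obtains pre x post where "js = pre @ x # post" "length pre + 1 = i"
proof
  show "js = take (i - 1) js @ js ! (i - 1) # drop i js"
    using id_take_nth_drop[of "i - 1" js] assms by simp
  show "length (take (i - 1) js) + 1 = i"
    using assms by simp
qed

context asder_operad
begin

text \<open>The linear map Q_n \<rightarrow> C n sending the monomial with exponent a to Mon (exponents of a).
  It is the unique candidate for a morphism Q \<rightarrow> (C, d, m).\<close>

definition lin_ext :: "nat \<Rightarrow> 'k mpoly \<Rightarrow> 'b" where
  "lin_ext n p = (\<Sum>a\<in>Poly_Mapping.keys p. sc (Poly_Mapping.lookup p a) (Mon (exps_of n a)))"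

lemma lin_ext_superset:
  "finite S \<Longrightarrow> Poly_Mapping.keys p \<subseteq> S \<Longrightarrow>
   lin_ext n p = (\<Sum>a\<in>S. sc (Poly_Mapping.lookup p a) (Mon (exps_of n a)))"
  unfolding lin_ext_def by (rule sum.mono_neutral_left) (auto simp: in_keys_iff)

lemma lin_ext_add: "lin_ext n (p + q) = lin_ext n p + lin_ext n q"
proof -
  let ?S = "Poly_Mapping.keys p \<union> Poly_Mapping.keys q"
  have "lin_ext n (p + q) = (\<Sum>a\<in>?S. sc (Poly_Mapping.lookup (p + q) a) (Mon (exps_of n a)))"
    by (rule lin_ext_superset) (auto simp: keys_add)
  also have "\<dots> = (\<Sum>a\<in>?S. sc (Poly_Mapping.lookup p a) (Mon (exps_of n a)))
                + (\<Sum>a\<in>?S. sc (Poly_Mapping.lookup q a) (Mon (exps_of n a)))"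
    by (simp add: lookup_add sc_add_left sum.distrib)
  also have "\<dots> = lin_ext n p + lin_ext n q"
    by (simp add: lin_ext_superset[symmetric])
  finally show ?thesis .
qed

lemma lin_ext_0 [simp]: "lin_ext n 0 = 0"
  by (simp add: lin_ext_def)

lemma lin_ext_sum: "lin_ext n (\<Sum>x\<in>A. g x) = (\<Sum>x\<in>A. lin_ext n (g x))"
  by (induction A rule: infinite_finite_induct) (auto simp: lin_ext_add)

lemma lin_ext_smult: "lin_ext n (poly_smult c p) = sc c (lin_ext n p)"
proof -
  have "lin_ext n (poly_smult c p) =
      (\<Sum>a\<in>Poly_Mapping.keys p. sc (c * Poly_Mapping.lookup p a) (Mon (exps_of n a)))"
    unfolding poly_smult_def
    by (subst lin_ext_superset[of "Poly_Mapping.keys p"]) (auto simp: keys_Const_mult lookup_Const_mult)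
  also have "\<dots> = sc c (lin_ext n p)"
    by (simp add: lin_ext_def sc_sum sc_mult)
  finally show ?thesis .
qed

lemma Mon_exps_of_C: "1 \<le> n \<Longrightarrow> Mon (exps_of n a) \<in> C n"
  using Mon_C[OF exps_of_nonempty] by simp

lemma lin_ext_C: "1 \<le> n \<Longrightarrow> lin_ext n p \<in> C n"
  unfolding lin_ext_def by (intro sum_C sc_C Mon_exps_of_C)

lemma lin_ext_Mon: "js \<noteq> [] \<Longrightarrow> length js = n \<Longrightarrow> lin_ext n (Q.Mon js) = Mon js"
proof -
  assume js: "js \<noteq> []" "length js = n"
  have "lin_ext n (Q.Mon js) = (\<Sum>a\<in>{exps_monomial js}. sc (Poly_Mapping.lookup (Q.Mon js) a) (Mon (exps_of n a)))"
    by (rule lin_ext_superset) (auto simp: Q_Mon_single js)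
  also have "\<dots> = Mon js"
    by (simp add: Q_Mon_single js exps_of_exps_monomial)
  finally show ?thesis .
qed

lemma lin_ext_D: "lin_ext 1 (Q.D k) = D k"
  using lin_ext_Mon[of "[k]" 1] by simp

lemma lin_ext_unit: "lin_ext 1 1 = e"
  using lin_ext_Mon[of "[0]" 1] by simp

lemma lin_ext_d: "lin_ext 1 (Var 1) = d"
proof -
  have "lin_ext 1 (Q.Mon [1]) = Mon [1]" by (rule lin_ext_Mon) auto
  then show ?thesis by (simp only: Q.Mon_1 Mon_1)
qed

lemma lin_ext_m: "lin_ext 2 1 = m"
proof -
  have "lin_ext 2 (Q.Mon [0, 0]) = Mon [0, 0]" by (rule lin_ext_Mon) auto
  then show ?thesis by (simp only: Q.Mon_0_0 Mon_0_0)
qed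

lemma lin_ext_comp_by_left_monomials:
  assumes N: "1 \<le> N" and M: "1 \<le> M" and i: "1 \<le> i" "i \<le> N" and Q: "Q \<in> Qc M" and P: "P \<in> Qc N"
    and monomials: "\<And>js. length js = N \<Longrightarrow>
        lin_ext (N + M - 1) (Qcomp N M i (Q.Mon js) Q) = cmp N M i (Mon js) (lin_ext M Q)"
  shows "lin_ext (N + M - 1) (Qcomp N M i P Q) = cmp N M i (lin_ext N P) (lin_ext M Q)"
proof -
  let ?c = "\<lambda>a. Poly_Mapping.lookup P a"
  let ?m = "\<lambda>a. Q.Mon (exps_of N a)"
  have "Qcomp N M i P Q = Qcomp N M i (\<Sum>a\<in>Poly_Mapping.keys P. poly_smult (?c a) (?m a)) Q"
    using Q_Mon_expansion[OF N P] by simp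
  also have "\<dots> = (\<Sum>a\<in>Poly_Mapping.keys P. poly_smult (?c a) (Qcomp N M i (?m a) Q))"
    by (subst Q.cmp_sum_left) (auto simp: N M i Q Q.Mon_exps_of_C Q.sc_C Q.cmp_sc_left)
  finally have "lin_ext (N + M - 1) (Qcomp N M i P Q)
      = (\<Sum>a\<in>Poly_Mapping.keys P. sc (?c a) (cmp N M i (Mon (exps_of N a)) (lin_ext M Q)))"
    by (simp add: lin_ext_sum lin_ext_smult monomials)
  also have "\<dots> = cmp N M i (lin_ext N P) (lin_ext M Q)"
    unfolding lin_ext_def[of N P]
    by (subst cmp_sum_left) (auto simp: N M i lin_ext_C Mon_exps_of_C sc_C cmp_sc_left)
  finally show ?thesis .
qed

lemma lin_ext_comp_by_right_monomials:
  assumes N: "1 \<le> N" and M: "1 \<le> M" and i: "1 \<le> i" "i \<le> N" and P: "P \<in> Qc N" and Q: "Q \<in> Qc M"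
    and monomials: "\<And>ks. length ks = M \<Longrightarrow>
        lin_ext (N + M - 1) (Qcomp N M i P (Q.Mon ks)) = cmp N M i (lin_ext N P) (Mon ks)"
  shows "lin_ext (N + M - 1) (Qcomp N M i P Q) = cmp N M i (lin_ext N P) (lin_ext M Q)"
proof -
  let ?c = "\<lambda>a. Poly_Mapping.lookup Q a"
  let ?m = "\<lambda>a. Q.Mon (exps_of M a)"
  have "Qcomp N M i P Q = Qcomp N M i P (\<Sum>a\<in>Poly_Mapping.keys Q. poly_smult (?c a) (?m a))"
    using Q_Mon_expansion[OF M Q] by simp
  also have "\<dots> = (\<Sum>a\<in>Poly_Mapping.keys Q. poly_smult (?c a) (Qcomp N M i P (?m a)))"
    by (subst Q.cmp_sum_right) (auto simp: N M i P Q.Mon_exps_of_C Q.sc_C Q.cmp_sc_right)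
  finally have "lin_ext (N + M - 1) (Qcomp N M i P Q)
      = (\<Sum>a\<in>Poly_Mapping.keys Q. sc (?c a) (cmp N M i (lin_ext N P) (Mon (exps_of M a))))"
    by (simp add: lin_ext_sum lin_ext_smult monomials)
  also have "\<dots> = cmp N M i (lin_ext N P) (lin_ext M Q)"
    unfolding lin_ext_def[of M Q]
    by (subst cmp_sum_right) (auto simp: N M i lin_ext_C Mon_exps_of_C sc_C cmp_sc_right)
  finally show ?thesis .
qed

end

context asder_operad
begin

text \<open>lin_ext preserves grafting D^k into any input: on monomials both sides add k to the
  corresponding exponent.\<close>

lemma lin_ext_comp_D:
  assumes N: "1 \<le> N" and i: "1 \<le> i" "i \<le> N" and P: "P \<in> Qc N"
  shows "lin_ext N (Qcomp N 1 i P (Q.D k)) = cmp N 1 i (lin_ext N P) (D k)"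
proof -
  have "lin_ext (N + 1 - 1) (Qcomp N 1 i P (Q.D k)) = cmp N 1 i (lin_ext N P) (lin_ext 1 (Q.D k))"
  proof (rule lin_ext_comp_by_left_monomials[OF N _ i Q.D_C P])
    fix js :: "nat list"
    assume js: "length js = N"
    obtain pre x post where split: "js = pre @ x # post" "length pre + 1 = i"
      by (rule split_at_slot[of i js]) (use i js in auto)
    have len: "N = length pre + length post + 1" using js split by simp
    have "lin_ext N (Qcomp N 1 i (Q.Mon js) (Q.D k)) = lin_ext N (Q.Mon (pre @ (x + k) # post))"
      unfolding split(1) by (rule arg_cong[where f="lin_ext N"], rule Q.Mon_D) (use len split in auto)
    also have "\<dots> = Mon (pre @ (x + k) # post)"
      by (rule lin_ext_Mon) (use len in auto)
    also have "\<dots> = cmp N 1 i (Mon js) (D k)"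
      unfolding split(1) by (rule Mon_D[symmetric]) (use len split in auto)
    finally show "lin_ext (N + 1 - 1) (Qcomp N 1 i (Q.Mon js) (Q.D k)) = cmp N 1 i (Mon js) (lin_ext 1 (Q.D k))"
      by (simp add: lin_ext_D)
  qed simp
  then show ?thesis by (simp add: lin_ext_D)
qed

text \<open>On a monomial operation this is proved by
  induction on the exponent j of that input: j = 0 is Mon_mu, and j + 1 reduces to j by the
  Leibniz rule, which holds on both sides.\<close>

lemma lin_ext_comp_mu_Mon:
  assumes len: "N = length pre + length post + 1" and i: "i = length pre + 1"
  shows "lin_ext (N + 1) (Qcomp N 2 i (Q.Mon (pre @ j # post)) 1) = cmp N 2 i (Mon (pre @ j # post)) m"
proof (induction j)
  case 0
  have "lin_ext (N + 1) (Qcomp N 2 i (Q.Mon (pre @ 0 # post)) 1) = lin_ext (N + 1) (Q.Mon (pre @ 0 # 0 # post))"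
    by (rule arg_cong[where f="lin_ext (N + 1)"], rule Q.Mon_mu) (use len i in auto)
  also have "\<dots> = Mon (pre @ 0 # 0 # post)"
    by (rule lin_ext_Mon) (use len in auto)
  also have "\<dots> = cmp N 2 i (Mon (pre @ 0 # post)) m"
    by (rule Mon_mu[symmetric]) (use len i in auto)
  finally show ?case by simp
next
  case (Suc j)
  let ?Y = "Qcomp N 2 i (Q.Mon (pre @ j # post)) 1 :: 'k mpoly"
  have N: "1 \<le> N" and i1: "1 \<le> i" "i \<le> N" using len i by auto
  have X: "Q.Mon (pre @ j # post) \<in> Qc N"
    using Q.Mon_C[of "pre @ j # post"] len by (simp add: add.assoc)
  have Y: "?Y \<in> Qc (N + 1)" by (rule Q.cmp_C[OF _ _ _ _ X Q.m_C]) (use N i1 in auto)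
  have "lin_ext (N + 1) (Qcomp N 2 i (Q.Mon (pre @ (j + 1) # post)) 1)
      = lin_ext (N + 1) (Qcomp (N + 1) 1 i ?Y (Q.D 1) + Qcomp (N + 1) 1 (i + 1) ?Y (Q.D 1))"
    by (simp add: Q.cmp_mu_Mon_Suc[OF len i] Q.D_1)
  also have "\<dots> = cmp (N + 1) 1 i (lin_ext (N + 1) ?Y) d + cmp (N + 1) 1 (i + 1) (lin_ext (N + 1) ?Y) d"
    using lin_ext_comp_D[of "N + 1" i ?Y 1] lin_ext_comp_D[of "N + 1" "i + 1" ?Y 1] Y i1
    by (simp add: lin_ext_add D_1)
  also have "\<dots> = cmp N 2 i (Mon (pre @ (j + 1) # post)) m"
    by (simp add: Suc.IH cmp_mu_Mon_Suc[OF len i])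
  finally show ?case by simp
qed

lemma lin_ext_comp_mu:
  assumes N: "1 \<le> N" and i: "1 \<le> i" "i \<le> N" and P: "P \<in> Qc N"
  shows "lin_ext (N + 1) (Qcomp N 2 i P 1) = cmp N 2 i (lin_ext N P) m"
proof -
  have "lin_ext (N + 2 - 1) (Qcomp N 2 i P 1) = cmp N 2 i (lin_ext N P) (lin_ext 2 1)"
  proof (rule lin_ext_comp_by_left_monomials[OF N _ i _ P])
    fix js :: "nat list"
    assume js: "length js = N"
    obtain pre x post where split: "js = pre @ x # post" "length pre + 1 = i"
      by (rule split_at_slot[of i js]) (use i js in auto)
    have "lin_ext (N + 1) (Qcomp N 2 i (Q.Mon (pre @ x # post)) 1) = cmp N 2 i (Mon (pre @ x # post)) m"
      by (rule lin_ext_comp_mu_Mon) (use js split in auto)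
    then show "lin_ext (N + 2 - 1) (Qcomp N 2 i (Q.Mon js) 1) = cmp N 2 i (Mon js) (lin_ext 2 1)"
      using split by (simp add: lin_ext_m)
  qed auto
  then show ?thesis by (simp add: lin_ext_m)
qed

text \<open>lin_ext preserves grafting any monomial operation ks, by induction on ks: grafting
  j # ks amounts to grafting \<mu>, then ks into its second input, then D^j into its first.\<close>

lemma lin_ext_comp_Mon:
  "ks \<noteq> [] \<Longrightarrow> 1 \<le> N \<Longrightarrow> 1 \<le> i \<Longrightarrow> i \<le> N \<Longrightarrow> P \<in> Qc N \<Longrightarrow>
   lin_ext (N + length ks - 1) (Qcomp N (length ks) i P (Q.Mon ks)) = cmp N (length ks) i (lin_ext N P) (Mon ks)"
proof (induction ks arbitrary: N i P)
  case (Cons k ks)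
  have N: "1 \<le> N" and i: "1 \<le> i" "i \<le> N" and P: "P \<in> Qc N" using Cons.prems by auto
  show ?case
  proof (cases "ks = []")
    case True
    then show ?thesis using lin_ext_comp_D[OF N i P, of k] by simp
  next
    case False
    let ?n = "length ks"
    let ?Y = "Qcomp N 2 i P 1 :: 'k mpoly"
    have n: "1 \<le> ?n" using False by (cases ks) auto
    have Y: "?Y \<in> Qc (N + 1)" by (rule Q.cmp_C[OF _ _ _ _ P Q.m_C]) (use N i in auto)
    have Z: "Qcomp (N + 1) ?n (i + 1) ?Y (Q.Mon ks) \<in> Qc (N + ?n)"
      by (rule Q.cmp_C[OF _ _ _ _ Y Q.Mon_C[OF False]]) (use N i n in auto)
    have "lin_ext (N + ?n) (Qcomp N (?n + 1) i P (Q.Mon (k # ks)))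
        = lin_ext (N + ?n) (Qcomp (N + ?n) 1 i (Qcomp (N + 1) ?n (i + 1) ?Y (Q.Mon ks)) (Q.D k))"
      by (simp add: Q.cmp_Mon_Cons[OF False N i P])
    also have "\<dots> = cmp (N + ?n) 1 i (lin_ext (N + ?n) (Qcomp (N + 1) ?n (i + 1) ?Y (Q.Mon ks))) (D k)"
      by (rule lin_ext_comp_D[OF _ _ _ Z]) (use N i in auto)
    also have "lin_ext (N + ?n) (Qcomp (N + 1) ?n (i + 1) ?Y (Q.Mon ks))
        = cmp (N + 1) ?n (i + 1) (cmp N 2 i (lin_ext N P) m) (Mon ks)"
      using Cons.IH[OF False, of "N + 1" "i + 1" ?Y] Y i lin_ext_comp_mu[OF N i P] by simp
    also have "cmp (N + ?n) 1 i (cmp (N + 1) ?n (i + 1) (cmp N 2 i (lin_ext N P) m) (Mon ks)) (D k)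
        = cmp N (?n + 1) i (lin_ext N P) (Mon (k # ks))"
      by (rule cmp_Mon_Cons[OF False N i lin_ext_C[OF N], symmetric])
    finally show ?thesis by simp
  qed
qed simp

lemma lin_ext_comp:
  assumes "1 \<le> N" "1 \<le> M" "1 \<le> i" "i \<le> N" "P \<in> Qc N" "Q \<in> Qc M"
  shows "lin_ext (N + M - 1) (Qcomp N M i P Q) = cmp N M i (lin_ext N P) (lin_ext M Q)"
proof (rule lin_ext_comp_by_right_monomials[OF assms])
  fix ks :: "nat list"
  assume ks: "length ks = M"
  with assms have "ks \<noteq> []" by auto
  from lin_ext_comp_Mon[OF this assms(1,3,4,5)] ks
  show "lin_ext (N + M - 1) (Qcomp N M i P (Q.Mon ks)) = cmp N M i (lin_ext N P) (Mon ks)"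
    by simp
qed

lemma lin_ext_hom: "ns_operad_hom poly_smult Qc 1 Qcomp sc C e cmp lin_ext"
  unfolding ns_operad_hom_def
  by (auto simp: lin_ext_C lin_ext_add lin_ext_smult lin_ext_unit lin_ext_comp)

text \<open>Uniqueness: a morphism sending x_1 to d and 1 \<in> Q_2 to m agrees with lin_ext on the
  monomial operations, hence everywhere by linearity.\<close>

lemma hom_D:
  assumes f: "ns_operad_hom poly_smult Qc 1 Qcomp sc C e cmp f" and fd: "f 1 (Var 1) = d"
  shows "f 1 (Q.D k) = D k"
proof (induction k)
  case 0
  then show ?case using hom_unit[OF f] by simp
next
  case (Suc k)
  have "f 1 (Q.D (k + 1)) = f (1 + 1 - 1) (Qcomp 1 1 1 (Var 1) (Q.D k))"
    by (simp add: Q.D_Suc)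
  also have "\<dots> = cmp 1 1 1 (f 1 (Var 1)) (f 1 (Q.D k))"
    by (rule hom_comp[OF f]) (auto simp: Q.d_C Q.D_C)
  finally show ?case using Suc fd by (simp add: D_Suc)
qed

lemma hom_Mon:
  assumes f: "ns_operad_hom poly_smult Qc 1 Qcomp sc C e cmp f" and fd: "f 1 (Var 1) = d" and fm: "f 2 1 = m"
  shows "js \<noteq> [] \<Longrightarrow> f (length js) (Q.Mon js) = Mon js"
proof (induction js)
  case (Cons j ks)
  show ?case
  proof (cases "ks = []")
    case True
    then show ?thesis using hom_D[OF f fd] by simp
  next
    case False
    let ?R = "Q.Mon ks :: 'k mpoly"
    have R: "?R \<in> Qc (length ks)" by (rule Q.Mon_C[OF False])
    have n: "1 \<le> length ks" using False by (cases ks) auto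
    have W: "Qcomp 2 (length ks) 2 1 ?R \<in> Qc (length ks + 1)"
      by (rule Q.cmp_C[OF _ _ _ _ Q.m_C R]) (use n in auto)
    have "f (length (j # ks)) (Q.Mon (j # ks))
        = f (length ks + 1 + 1 - 1) (Qcomp (length ks + 1) 1 1 (Qcomp 2 (length ks) 2 1 ?R) (Q.D j))"
      by (simp add: Q.Mon_Cons[OF False])
    also have "\<dots> = cmp (length ks + 1) 1 1 (f (2 + length ks - 1) (Qcomp 2 (length ks) 2 1 ?R)) (D j)"
      using hom_comp[OF f _ _ _ _ W Q.D_C] hom_D[OF f fd] by (simp add: add.commute)
    also have "f (2 + length ks - 1) (Qcomp 2 (length ks) 2 1 ?R) = cmp 2 (length ks) 2 m (Mon ks)"
      using hom_comp[OF f _ _ _ _ Q.m_C R] n fm Cons.IH False by simp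
    finally show ?thesis using Mon_Cons[OF False, of j] by simp
  qed
qed simp

lemma hom_unique:
  assumes f: "ns_operad_hom poly_smult Qc 1 Qcomp sc C e cmp f" and fd: "f 1 (Var 1) = d" and fm: "f 2 1 = m"
    and n: "1 \<le> n" and x: "x \<in> Qc n"
  shows "f n x = lin_ext n x"
proof -
  let ?c = "\<lambda>a. Poly_Mapping.lookup x a"
  let ?m = "\<lambda>a. Q.Mon (exps_of n a)"
  have "f n x = f n (\<Sum>a\<in>Poly_Mapping.keys x. poly_smult (?c a) (?m a))"
    using Q_Mon_expansion[OF n x] by simp
  also have "\<dots> = (\<Sum>a\<in>Poly_Mapping.keys x. f n (poly_smult (?c a) (?m a)))"
    by (rule hom_sum[OF f n]) (simp add: Q.Mon_exps_of_C Q.sc_C n)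
  also have "\<dots> = (\<Sum>a\<in>Poly_Mapping.keys x. sc (?c a) (Mon (exps_of n a)))"
    using hom_Mon[OF f fd fm exps_of_nonempty[OF n]]
    by (intro sum.cong) (auto simp: hom_smult[OF f n] Q.Mon_exps_of_C n)
  also have "\<dots> = lin_ext n x" by (simp add: lin_ext_def)
  finally show ?thesis .
qed

end

theorem Q_presents_AsDer:
  "presents_AsDer (poly_smult :: 'k::comm_ring_1 \<Rightarrow> 'k mpoly \<Rightarrow> 'k mpoly) Qc 1 Qcomp (Var 1) 1
     (B :: 'b::ab_group_add itself)"
proof -
  have universal:
    "(\<exists>f. ns_operad_hom poly_smult Qc 1 Qcomp sc C e cmp f \<and> f 1 (Var 1) = d \<and> f 2 1 = m) \<and>
     (\<forall>f g. ns_operad_hom poly_smult Qc 1 Qcomp sc C e cmp f \<and> f 1 (Var 1) = d \<and> f 2 1 = m \<and>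
            ns_operad_hom poly_smult Qc 1 Qcomp sc C e cmp g \<and> g 1 (Var 1) = d \<and> g 2 1 = m \<longrightarrow>
            (\<forall>n\<ge>1. \<forall>x\<in>Qc n. f n x = g n x))"
    if "ns_operad sc C e cmp" "d \<in> C 1" "m \<in> C 2" "asder_relations cmp d m"
    for sc :: "'k \<Rightarrow> 'b \<Rightarrow> 'b" and C e cmp d m
  proof -
    interpret P: asder_operad sc C e cmp d m
      using that by unfold_locales
    show ?thesis
      using P.lin_ext_hom P.lin_ext_d P.lin_ext_m P.hom_unique by metis
  qed
  show ?thesis
    unfolding presents_AsDer_def using universal Q.d_C Q.m_C Q.relations by blast
qed

section \<open>The full composition in Q\<close>

text \<open>From here on Suc n is no longer rewritten to n + 1 (list induction works with Suc).\<close>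

declare Suc_eq_plus1 [simp del]

text \<open>For inputs qs = [(i_1, Q_1), ..., (i_k, Q_k)], offsets qs r = i_1 + ... + i_r, and
  block_sums qs replaces x_r by the r-th block sum; variables beyond k are shifted, which is
  needed for the partial full compositions occurring in the induction.\<close>

definition offsets :: "(nat \<times> 'a) list \<Rightarrow> nat \<Rightarrow> nat" where
  "offsets qs r = (\<Sum>t<r. fst (qs ! t))"

definition block_sums :: "(nat \<times> 'a) list \<Rightarrow> nat \<Rightarrow> 'k::comm_ring_1 mpoly" where
  "block_sums qs v =
     (if 1 \<le> v \<and> v \<le> length qs then (\<Sum>j\<in>{offsets qs (v - 1) + 1..offsets qs v}. Var j)
      else Var (offsets qs (length qs) + v - length qs))"

lemma offsets_append: "r \<le> length qs \<Longrightarrow> offsets (qs @ xs) r = offsets qs r"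
  unfolding offsets_def by (rule sum.cong) (auto simp: nth_append)

lemma offsets_snoc_last: "offsets (qs @ [(m, Q)]) (length qs + 1) = offsets qs (length qs) + m"
  by (simp add: offsets_def nth_append One_nat_def)

lemma block_sums_graft:
  assumes m: "1 \<le> m" and v: "1 \<le> v"
  shows "subst (block_sums qs) (block_subst m (length qs + 1) v) = (block_sums (qs @ [(m, Q)]) v :: 'k::comm_ring_1 mpoly)"
proof -
  let ?r = "length qs"
  let ?qs = "qs @ [(m, Q)]"
  have off_eq: "offsets ?qs t = offsets qs t" if "t \<le> ?r" for t
    using offsets_append that by blast
  consider "v \<le> ?r" | "v = ?r + 1" | "v > ?r + 1" by linarith
  then show ?thesis
  proof cases
    case 1
    then show ?thesis using v off_eq[of v] off_eq[of "v - 1"] by (simp add: block_subst_def block_sums_def)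
  next
    case 2
    have "subst (block_sums qs) (block_subst m (?r + 1) v) = (\<Sum>t<m. block_sums qs (?r + 1 + t) :: 'k mpoly)"
      using 2 by (simp add: block_subst_def subst_sum)
    also have "\<dots> = (\<Sum>t<m. Var (offsets qs ?r + 1 + t))"
      by (rule sum.cong) (auto simp: block_sums_def add.assoc)
    also have "\<dots> = sum Var {offsets qs ?r + 1..offsets qs ?r + 1 + m - 1}"
      by (rule sum_block_shift[symmetric]) simp
    also have "\<dots> = block_sums ?qs v"
      using 2 off_eq[of ?r] offsets_snoc_last[of qs m Q] m by (simp add: block_sums_def)
    finally show ?thesis .
  next
    case 3
    then have "\<not> v + m - 1 \<le> ?r" "\<not> v \<le> ?r + 1"
      "offsets qs ?r + (v + m - 1) - ?r = offsets qs ?r + m + v - (?r + 1)" using m by auto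
    then show ?thesis using 3 offsets_snoc_last[of qs m Q] by (simp add: block_subst_def block_sums_def Suc_eq_plus1)
  qed
qed

lemma block_sums_shift:
  "1 \<le> v \<Longrightarrow> subst (block_sums qs) (shift_subst (length qs + 1) v) = (Var (offsets qs (length qs) + v) :: 'k::comm_ring_1 mpoly)"
  by (simp add: shift_subst_def block_sums_def)

text \<open>Grafting the last k of the a inputs of P: induction on the list of inputs, adding one
  input on the right at a time (full_comp_aux grafts from the right).\<close>

lemma full_comp_aux_Q:
  fixes P :: "'k::comm_ring_1 mpoly" and qs :: "(nat \<times> 'k mpoly) list"
  assumes "length qs \<le> a" "1 \<le> a" "P \<in> Qc a" "\<forall>q\<in>set qs. 1 \<le> fst q \<and> snd q \<in> Qc (fst q)"
  shows "full_comp_aux Qcomp a P (rev qs) =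
     subst (block_sums qs) P * (\<Prod>t<length qs. subst (\<lambda>v. Var (offsets qs t + v)) (snd (qs ! t)))"
  using assms
proof (induction qs arbitrary: a P rule: rev_induct)
  case Nil
  have "subst (block_sums ([] :: (nat \<times> 'k mpoly) list)) P = P"
    by (rule subst_eq_self) (auto simp: block_sums_def offsets_def)
  then show ?case by simp
next
  case (snoc x qs)
  obtain m Q where x: "x = (m, Q)" by (cases x)
  let ?r = "length qs"
  let ?qs = "qs @ [(m, Q)]"
  have m: "1 \<le> m" and Q: "Q \<in> Qc m" using snoc.prems(4) x by auto
  have r: "?r + 1 \<le> a" using snoc.prems(1) by simp
  have P': "Qcomp a m (?r + 1) P Q \<in> Qc (a + m - 1)"
    by (rule Qcomp_Qc[OF snoc.prems(3) Q]) (use r m in auto)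
  have "subst (block_sums qs) (Qcomp a m (?r + 1) P Q) =
      subst (\<lambda>v. subst (block_sums qs) (block_subst m (?r + 1) v)) P
      * subst (\<lambda>v. subst (block_sums qs) (shift_subst (?r + 1) v)) Q"
    by (simp add: Qcomp_eq subst_mult subst_subst)
  also have "\<dots> = subst (block_sums ?qs) P * subst (\<lambda>v. Var (offsets qs ?r + v)) Q"
  proof -
    have "subst (\<lambda>v. subst (block_sums qs) (block_subst m (?r + 1) v)) P = subst (block_sums ?qs) P"
      by (rule subst_cong_Qc[OF snoc.prems(3)]) (rule block_sums_graft[OF m])
    moreover have "subst (\<lambda>v. subst (block_sums qs) (shift_subst (?r + 1) v)) Q
        = subst (\<lambda>v. Var (offsets qs ?r + v)) Q"
      by (rule subst_cong_Qc[OF Q]) (rule block_sums_shift)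
    ultimately show ?thesis by simp
  qed
  finally have last: "subst (block_sums qs) (Qcomp a m (?r + 1) P Q)
      = subst (block_sums ?qs) P * subst (\<lambda>v. Var (offsets ?qs ?r + v)) Q"
    using offsets_append[of ?r qs] by simp
  have earlier: "(\<Prod>t<?r. subst (\<lambda>v. Var (offsets qs t + v)) (snd (qs ! t))) =
     (\<Prod>t<?r. subst (\<lambda>v. Var (offsets ?qs t + v)) (snd (?qs ! t)))"
    by (rule prod.cong) (auto simp: offsets_append nth_append)
  have "full_comp_aux Qcomp a P (rev ?qs)
      = full_comp_aux Qcomp (a + m - 1) (Qcomp a m (?r + 1) P Q) (rev qs)"
    by simp
  also have "\<dots> = subst (block_sums qs) (Qcomp a m (?r + 1) P Q) * (\<Prod>t<?r. subst (\<lambda>v. Var (offsets qs t + v)) (snd (qs ! t)))"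
    by (rule snoc.IH[OF _ _ P']) (use snoc.prems r m in auto)
  also have "\<dots> = subst (block_sums ?qs) P * (\<Prod>t<length ?qs. subst (\<lambda>v. Var (offsets ?qs t + v)) (snd (?qs ! t)))"
    unfolding last earlier by (simp add: mult_ac)
  finally show ?case using x by simp
qed

theorem Q_full_comp:
  "\<forall>k (P :: 'k::comm_ring_1 mpoly) (qs :: (nat \<times> 'k mpoly) list).
     1 \<le> k \<and> P \<in> Qc k \<and> length qs = k \<and> (\<forall>q\<in>set qs. 1 \<le> fst q \<and> snd q \<in> Qc (fst q)) \<longrightarrow>
     (let off = (\<lambda>r. \<Sum>t<r. fst (qs ! t)) in
      full_comp Qcomp k P qs =
        subst (\<lambda>r. \<Sum>j\<in>{off (r - 1) + 1..off r}. Var j) P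
        * (\<Prod>r\<in>{1..k}. subst (\<lambda>v. Var (off (r - 1) + v)) (snd (qs ! (r - 1)))))"
proof (intro allI impI)
  fix k and P :: "'k mpoly" and qs :: "(nat \<times> 'k mpoly) list"
  assume a: "1 \<le> k \<and> P \<in> Qc k \<and> length qs = k \<and> (\<forall>q\<in>set qs. 1 \<le> fst q \<and> snd q \<in> Qc (fst q))"
  have off: "(\<lambda>r. \<Sum>t<r. fst (qs ! t)) = offsets qs"
    by (simp add: offsets_def fun_eq_iff)
  have "full_comp Qcomp k P qs
      = subst (block_sums qs) P * (\<Prod>t<length qs. subst (\<lambda>v. Var (offsets qs t + v)) (snd (qs ! t)))"
    unfolding full_comp_def by (rule full_comp_aux_Q) (use a in auto)
  also have "subst (block_sums qs) P = subst (\<lambda>r. \<Sum>j\<in>{offsets qs (r - 1) + 1..offsets qs r}. Var j) P"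
    by (rule subst_cong_Qc[of P k]) (use a in \<open>auto simp: block_sums_def\<close>)
  also have "(\<Prod>t<length qs. subst (\<lambda>v. Var (offsets qs t + v)) (snd (qs ! t))) =
      (\<Prod>r\<in>{1..k}. subst (\<lambda>v. Var (offsets qs (r - 1) + v)) (snd (qs ! (r - 1))))"
    using a prod.atLeast1_atMost_eq[of "\<lambda>r. subst (\<lambda>v. Var (offsets qs (r - 1) + v)) (snd (qs ! (r - 1)))" k]
    by (simp add: One_nat_def)
  finally show "let off = (\<lambda>r. \<Sum>t<r. fst (qs ! t)) in
      full_comp Qcomp k P qs =
        subst (\<lambda>r. \<Sum>j\<in>{off (r - 1) + 1..off r}. Var j) P
        * (\<Prod>r\<in>{1..k}. subst (\<lambda>v. Var (off (r - 1) + v)) (snd (qs ! (r - 1))))"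
    unfolding off Let_def .
qed

lemma Q_mu_n: "mu_n Qcomp (1 :: 'k::comm_ring_1 mpoly) 1 n = 1"
proof -
  have "mu_n Qcomp (1 :: 'k mpoly) 1 n = 1 \<and> mu_n Qcomp (1 :: 'k mpoly) 1 (Suc n) = 1"
    by (induction n) (auto simp: Qcomp_eq)
  then show ?thesis by blast
qed

theorem Q_der_monomials:
  "\<forall>js :: nat list. 1 \<le> length js \<longrightarrow>
     full_comp Qcomp (length js) (mu_n Qcomp (1 :: 'k::comm_ring_1 mpoly) 1 (length js))
         (map (\<lambda>j. (1, op_pow Qcomp 1 (Var 1) j)) js)
     = (\<Prod>r\<in>{1..length js}. Var r ^ (js ! (r - 1)))"
proof (intro allI impI)
  fix js :: "nat list"
  assume l: "1 \<le> length js"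
  let ?qs = "map (\<lambda>j. (1, op_pow Qcomp 1 (Var 1) j)) js :: (nat \<times> 'k mpoly) list"
  have valid: "\<forall>q\<in>set ?qs. 1 \<le> fst q \<and> snd q \<in> Qc (fst q)"
    using Q.D_C by auto
  have off: "(\<Sum>t<r. fst (?qs ! t)) = r" if "r \<le> length js" for r
    using that by (induction r) auto
  have factor: "subst (\<lambda>v. Var ((\<Sum>t<r - 1. fst (?qs ! t)) + v)) (snd (?qs ! (r - 1))) = Var r ^ (js ! (r - 1))"
    if "r \<in> {1..length js}" for r
  proof -
    have "r - 1 < length js" using that by auto
    then show ?thesis
      using that off[of "r - 1"] by (simp add: Q_D subst_power)
  qed
  have "full_comp Qcomp (length js) 1 ?qs =
      subst (\<lambda>r. \<Sum>j\<in>{(\<Sum>t<r - 1. fst (?qs ! t)) + 1..(\<Sum>t<r. fst (?qs ! t))}. Var j) 1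
      * (\<Prod>r\<in>{1..length js}. subst (\<lambda>v. Var ((\<Sum>t<r - 1. fst (?qs ! t)) + v)) (snd (?qs ! (r - 1))))"
    using Q_full_comp[rule_format, of "length js" 1 ?qs] l valid by (simp add: Let_def)
  also have "\<dots> = (\<Prod>r\<in>{1..length js}. Var r ^ (js ! (r - 1)))"
    unfolding subst_1 mult_1 by (rule prod.cong[OF refl factor])
  finally show "full_comp Qcomp (length js) (mu_n Qcomp (1 :: 'k mpoly) 1 (length js)) ?qs
      = (\<Prod>r\<in>{1..length js}. Var r ^ (js ! (r - 1)))"
    by (simp add: Q_mu_n)
qed

theorem theorem2p2:
  fixes B :: "'b::ab_group_add itself"
  shows
    \<comment> \<open>(Q_n) with the partial compositions is an ns operad with unit 1 \<in> K[x_1]\<close>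
    "ns_operad (poly_smult :: 'k::comm_ring_1 \<Rightarrow> 'k mpoly \<Rightarrow> 'k mpoly) Qc 1 Qcomp
     \<comment> \<open>AsDer \<cong> Q via id \<mapsto> 1, D \<mapsto> x_1, \<mu> \<mapsto> 1 \<in> K[x_1,x_2] (universal property)\<close>
     \<and> presents_AsDer (poly_smult :: 'k::comm_ring_1 \<Rightarrow> 'k mpoly \<Rightarrow> 'k mpoly) Qc 1 Qcomp (Var 1) 1 B
     \<comment> \<open>formula for the full composition\<close>
     \<and> (\<forall>k (P :: 'k mpoly) (qs :: (nat \<times> 'k mpoly) list).
          1 \<le> k \<and> P \<in> Qc k \<and> length qs = k \<and> (\<forall>q\<in>set qs. 1 \<le> fst q \<and> snd q \<in> Qc (fst q)) \<longrightarrow>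
          (let off = (\<lambda>r. \<Sum>t<r. fst (qs ! t)) in
           full_comp Qcomp k P qs =
             subst (\<lambda>r. \<Sum>j\<in>{off (r - 1) + 1..off r}. Var j) P
             * (\<Prod>r\<in>{1..k}. subst (\<lambda>v. Var (off (r - 1) + v)) (snd (qs ! (r - 1))))))
     \<comment> \<open>\<mu>_n \<circ> (D^j_1, ..., D^j_n) corresponds to x_1^j_1 ... x_n^j_n\<close>
     \<and> (\<forall>js :: nat list. 1 \<le> length js \<longrightarrow>
          full_comp Qcomp (length js) (mu_n Qcomp (1 :: 'k mpoly) 1 (length js))
              (map (\<lambda>j. (1, op_pow Qcomp 1 (Var 1) j)) js)
          = (\<Prod>r\<in>{1..length js}. Var r ^ (js ! (r - 1))))"
  using Q_operad Q_presents_AsDer Q_full_comp Q_der_monomials by blast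

end
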